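(* Let $K$ be a definable, definably compact subset of $R^n$. There exists a definable, definably compact subset $E$ of $({}^*\mathbf R)^n$ contained in $A_{\mathrm r}^n$ such that the symmetric difference of $\overline E$ and $K$ has dimension $\le n-1$.
   Context: Notation: ${}^*\mathbf R$ is the ultrapower of $\mathbf R$ along a fixed non-principal ultrafilter on $\mathbf C$ converging to $0$, $t$ the class of $(t)_t$; $a\in{}^*\mathbf R$ is $t$-bounded if $|a|\le|t|^{-N}$ for some integer $N\ge0$ and $t$-negligible if $|a|\le|t|^N$ for all $N\ge0$; $A_{\mathrm r}$ is the ring of $t$-bounded elements, $\mathfrak m_{\mathrm r}$ its maximal ideal of $t$-negligible elements, $R=A_{\mathrm r}/\mathfrak m_{\mathrm r}$ (a real closed field), and $\overline E$ is the image of $E$ under the reduction map $A_{\mathrm r}^n\to R^n$. "Definable" means semi-algebraic over the relevant real closed field; definable compactness is in the sense of o-minimal geometry (for semi-algebraic subsets of affine space: closed and bounded). *)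

theory Defs
  imports Complex_Main "HOL-Analysis.Finite_Cartesian_Product"
begin

record 'a ostr =
  ocarrier :: "'a set"
  ozero :: 'a
  oone :: 'a
  oadd :: "'a \<Rightarrow> 'a \<Rightarrow> 'a"
  omul :: "'a \<Rightarrow> 'a \<Rightarrow> 'a"
  oless :: "'a \<Rightarrow> 'a \<Rightarrow> bool"

definition ospace :: "('a, 'b) ostr_scheme \<Rightarrow> ('a ^ 'n) set" where
  "ospace S = {x. \<forall>i. x $ i \<in> ocarrier S}"

inductive_set polyfun :: "('a, 'b) ostr_scheme \<Rightarrow> ('a ^ 'n \<Rightarrow> 'a) set"
  for S :: "('a, 'b) ostr_scheme" where
  pconst: "c \<in> ocarrier S \<Longrightarrow> (\<lambda>x. c) \<in> polyfun S"
| pcoord: "(\<lambda>x. x $ i) \<in> polyfun S"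
| padd: "p \<in> polyfun S \<Longrightarrow> q \<in> polyfun S \<Longrightarrow> (\<lambda>x. oadd S (p x) (q x)) \<in> polyfun S"
| pmul: "p \<in> polyfun S \<Longrightarrow> q \<in> polyfun S \<Longrightarrow> (\<lambda>x. omul S (p x) (q x)) \<in> polyfun S"

text \<open>Semi-algebraic (definable) subsets of S^n: Boolean combinations of sets {p > 0}.\<close>
inductive_set semialg :: "('a, 'b) ostr_scheme \<Rightarrow> ('a ^ 'n) set set"
  for S :: "('a, 'b) ostr_scheme" where
  sbasic: "p \<in> polyfun S \<Longrightarrow> {x \<in> ospace S. oless S (ozero S) (p x)} \<in> semialg S"
| scompl: "A \<in> semialg S \<Longrightarrow> ospace S - A \<in> semialg S"
| sinter: "A \<in> semialg S \<Longrightarrow> B \<in> semialg S \<Longrightarrow> A \<inter> B \<in> semialg S"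

text \<open>Closed in the product of order topologies.\<close>
definition oclosed :: "('a, 'b) ostr_scheme \<Rightarrow> ('a ^ 'n) set \<Rightarrow> bool" where
  "oclosed S A \<longleftrightarrow> A \<subseteq> ospace S \<and>
     (\<forall>x \<in> ospace S - A. \<exists>a b. a \<in> ospace S \<and> b \<in> ospace S \<and>
        (\<forall>i. oless S (a $ i) (x $ i) \<and> oless S (x $ i) (b $ i)) \<and>
        (\<forall>y \<in> A. \<not> (\<forall>i. oless S (a $ i) (y $ i) \<and> oless S (y $ i) (b $ i))))"

definition obounded :: "('a, 'b) ostr_scheme \<Rightarrow> ('a ^ 'n) set \<Rightarrow> bool" where
  "obounded S A \<longleftrightarrow> A \<subseteq> ospace S \<and>
     (\<exists>a \<in> ocarrier S. \<exists>b \<in> ocarrier S. \<forall>y \<in> A. \<forall>i. oless S a (y $ i) \<and> oless S (y $ i) b)"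

text \<open>Definably compact = closed and bounded (for semi-algebraic subsets of affine space).\<close>
definition def_compact :: "('a, 'b) ostr_scheme \<Rightarrow> ('a ^ 'n) set \<Rightarrow> bool" where
  "def_compact S A \<longleftrightarrow> A \<in> semialg S \<and> oclosed S A \<and> obounded S A"

definition proj_has_interior ::
    "('a, 'b) ostr_scheme \<Rightarrow> ('a ^ 'n) set \<Rightarrow> nat \<Rightarrow> (nat \<Rightarrow> 'n) \<Rightarrow> bool" where
  "proj_has_interior S A d \<sigma> \<longleftrightarrow>
     (\<exists>a b. (\<forall>j<d. a j \<in> ocarrier S \<and> b j \<in> ocarrier S \<and> oless S (a j) (b j)) \<and>
        (\<forall>y. (\<forall>j<d. y j \<in> ocarrier S \<and> oless S (a j) (y j) \<and> oless S (y j) (b j)) \<longrightarrow>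
              (\<exists>x \<in> A. \<forall>j<d. x $ (\<sigma> j) = y j)))"

text \<open>dim A \<le> k: no coordinate projection onto more than k coordinates has image with
  nonempty interior (the o-minimal dimension; dim of the empty set is -infinity).\<close>
definition dim_le :: "('a, 'b) ostr_scheme \<Rightarrow> ('a ^ 'n) set \<Rightarrow> nat \<Rightarrow> bool" where
  "dim_le S A k \<longleftrightarrow>
     (\<forall>d \<sigma>. k < d \<and> inj_on \<sigma> {..<d} \<longrightarrow> \<not> proj_has_interior S A d \<sigma>)"

definition is_ultrafilter :: "'a set set \<Rightarrow> bool" where
  "is_ultrafilter U \<longleftrightarrow> UNIV \<in> U \<and> {} \<notin> U \<and>
     (\<forall>A B. A \<in> U \<and> A \<subseteq> B \<longrightarrow> B \<in> U) \<and>
     (\<forall>A B. A \<in> U \<and> B \<in> U \<longrightarrow> A \<inter> B \<in> U) \<and>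
     (\<forall>A. A \<in> U \<or> - A \<in> U)"

definition nonprincipal :: "'a set set \<Rightarrow> bool" where
  "nonprincipal U \<longleftrightarrow> (\<forall>A. finite A \<longrightarrow> A \<notin> U)"

definition converges_to_0 :: "complex set set \<Rightarrow> bool" where
  "converges_to_0 U \<longleftrightarrow> (\<forall>e>0. {z. cmod z < e} \<in> U)"

text \<open>Elements of *R are equivalence classes of functions C \<Rightarrow> R modulo U.\<close>
type_synonym hstar = "(complex \<Rightarrow> real) set"

definition ueq :: "complex set set \<Rightarrow> ((complex \<Rightarrow> real) \<times> (complex \<Rightarrow> real)) set" where
  "ueq U = {(f, g). {z. f z = g z} \<in> U}"

definition hcls :: "complex set set \<Rightarrow> (complex \<Rightarrow> real) \<Rightarrow> hstar" where
  "hcls U f = ueq U `` {f}"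

definition hrep :: "hstar \<Rightarrow> (complex \<Rightarrow> real)" where
  "hrep a = (SOME f. f \<in> a)"

definition hstar_str :: "complex set set \<Rightarrow> hstar ostr" where
  "hstar_str U = \<lparr> ocarrier = UNIV // ueq U,
     ozero = hcls U (\<lambda>z. 0), oone = hcls U (\<lambda>z. 1),
     oadd = (\<lambda>a b. hcls U (\<lambda>z. hrep a z + hrep b z)),
     omul = (\<lambda>a b. hcls U (\<lambda>z. hrep a z * hrep b z)),
     oless = (\<lambda>a b. {z. hrep a z < hrep b z} \<in> U) \<rparr>"

definition tbounded :: "complex set set \<Rightarrow> hstar \<Rightarrow> bool" where
  "tbounded U a \<longleftrightarrow> (\<exists>N::nat. {z. \<bar>hrep a z\<bar> \<le> inverse (cmod z ^ N)} \<in> U)"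

definition tnegligible :: "complex set set \<Rightarrow> hstar \<Rightarrow> bool" where
  "tnegligible U a \<longleftrightarrow> (\<forall>N::nat. {z. \<bar>hrep a z\<bar> \<le> cmod z ^ N} \<in> U)"

definition Ar :: "complex set set \<Rightarrow> hstar set" where
  "Ar U = {a \<in> UNIV // ueq U. tbounded U a}"

text \<open>Congruence modulo the maximal ideal m_r of t-negligible elements.\<close>
definition req :: "complex set set \<Rightarrow> (hstar \<times> hstar) set" where
  "req U = {(a, b). a \<in> Ar U \<and> b \<in> Ar U \<and> tnegligible U (hcls U (\<lambda>z. hrep a z - hrep b z))}"

type_synonym rfield = "hstar set"

definition rcls :: "complex set set \<Rightarrow> hstar \<Rightarrow> rfield" where
  "rcls U a = req U `` {a}"

definition rrep :: "rfield \<Rightarrow> hstar" where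
  "rrep x = (SOME a. a \<in> x)"

text \<open>R = A_r / m_r with the induced ring operations and order.\<close>
definition R_str :: "complex set set \<Rightarrow> rfield ostr" where
  "R_str U = \<lparr> ocarrier = Ar U // req U,
     ozero = rcls U (ozero (hstar_str U)), oone = rcls U (oone (hstar_str U)),
     oadd = (\<lambda>x y. rcls U (oadd (hstar_str U) (rrep x) (rrep y))),
     omul = (\<lambda>x y. rcls U (omul (hstar_str U) (rrep x) (rrep y))),
     oless = (\<lambda>x y. x \<noteq> y \<and> oless (hstar_str U) (rrep x) (rrep y)) \<rparr>"

definition reduce_set :: "complex set set \<Rightarrow> (hstar ^ 'n) set \<Rightarrow> (rfield ^ 'n) set" where
  "reduce_set U E = (\<lambda>x. \<chi> i. rcls U (x $ i)) ` E"

end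

theory Submission
  imports Defs "HOL-Computational_Algebra.Polynomial"
begin

text \<open>
  Write \<open>K\<close> as a Boolean combination of sets \<open>{p > 0}\<close>, push the negations to the atoms, and
  replace an atom \<open>p > 0\<close> (resp. its negation) by the closed condition \<open>-q \<le> 0\<close>
  (resp. \<open>q \<le> 0\<close>), where \<open>q\<close> is \<open>p\<close> with its coefficients lifted from \<open>R\<close> to \<open>A\<^sub>r\<close>;
  atoms with \<open>p\<close> identically zero become false (resp. true). Intersected with a closed box,
  this gives a closed, bounded, definable \<open>E \<subseteq> A\<^sub>r\<^sup>n\<close>. If \<open>p\<close> does not vanish at the
  reduction of \<open>x \<in> A\<^sub>r\<^sup>n\<close>, then \<open>q(x)\<close> is not \<open>t\<close>-negligible and has the sign of \<open>p\<close>
  there, so the reduction of \<open>E\<close> agrees with \<open>K\<close> off the zero sets of the atoms of \<open>K\<close>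
  that are not identically zero. Their union has empty interior: a polynomial vanishing on a
  box vanishes everywhere (Lagrange interpolation at nodes spaced by a fixed power of \<open>t\<close>),
  and non-vanishing is an open condition.
\<close>

lemma ospace_nth: "y \<in> ospace S \<Longrightarrow> y $ i \<in> ocarrier S"
  unfolding ospace_def by simp

lemma ospace_upd:
  "y \<in> ospace S \<Longrightarrow> c \<in> ocarrier S \<Longrightarrow> (\<chi> j. if j = i then c else y $ j) \<in> ospace S"
  unfolding ospace_def by auto

lemma semialg_Un:
  assumes "A \<in> semialg S" "B \<in> semialg S" "A \<subseteq> ospace S" "B \<subseteq> ospace S"
  shows "A \<union> B \<in> semialg S"
proof -
  have "ospace S - ((ospace S - A) \<inter> (ospace S - B)) \<in> semialg S"
    using assms by (intro semialg.scompl semialg.sinter)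
  moreover have "ospace S - ((ospace S - A) \<inter> (ospace S - B)) = A \<union> B"
    using assms by auto
  ultimately show ?thesis by simp
qed

lemma oclosed_Int:
  assumes "oclosed S A" "oclosed S B"
  shows "oclosed S (A \<inter> B)"
  unfolding oclosed_def
proof (intro conjI ballI)
  show "A \<inter> B \<subseteq> ospace S" using assms(1) by (auto simp: oclosed_def)
  fix x assume "x \<in> ospace S - A \<inter> B"
  then consider "x \<in> ospace S - A" | "x \<in> ospace S - B" by blast
  then show "\<exists>a b. a \<in> ospace S \<and> b \<in> ospace S \<and>
      (\<forall>i. oless S (a $ i) (x $ i) \<and> oless S (x $ i) (b $ i)) \<and>
      (\<forall>y\<in>A \<inter> B. \<not> (\<forall>i. oless S (a $ i) (y $ i) \<and> oless S (y $ i) (b $ i)))"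
    using assms unfolding oclosed_def by cases blast+
qed

definition in_box :: "('a, 'b) ostr_scheme \<Rightarrow> ('n \<Rightarrow> 'a) \<Rightarrow> ('n \<Rightarrow> 'a) \<Rightarrow> 'a ^ 'n \<Rightarrow> bool" where
  "in_box S \<alpha> \<beta> y \<longleftrightarrow> (\<forall>i. oless S (\<alpha> i) (y $ i) \<and> oless S (y $ i) (\<beta> i))"

definition nondegenerate_box :: "('a, 'b) ostr_scheme \<Rightarrow> ('n \<Rightarrow> 'a) \<Rightarrow> ('n \<Rightarrow> 'a) \<Rightarrow> bool" where
  "nondegenerate_box S \<alpha> \<beta> \<longleftrightarrow> (\<forall>i. \<alpha> i \<in> ocarrier S \<and> \<beta> i \<in> ocarrier S \<and> oless S (\<alpha> i) (\<beta> i))"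

lemma proj_has_interior_full_imp_box:
  fixes X :: "('a ^ 'n) set"
  assumes d: "CARD('n) - 1 < d" "inj_on \<sigma> {..<d}" and P: "proj_has_interior S X d \<sigma>"
  shows "\<exists>\<alpha> \<beta>. nondegenerate_box S \<alpha> \<beta> \<and> (\<forall>y\<in>ospace S. in_box S \<alpha> \<beta> y \<longrightarrow> y \<in> X)"
proof -
  have "card {..<d} \<le> CARD('n)" using d by (intro card_inj_on_le) auto
  then have "d = CARD('n)" using d by simp
  then have surj: "\<sigma> ` {..<d} = UNIV"
    using d card_image[OF d(2)] by (intro card_subset_eq) auto
  define \<tau> where "\<tau> = inv_into {..<d} \<sigma>"
  have \<tau>: "\<tau> i < d" "\<sigma> (\<tau> i) = i" for i
    unfolding \<tau>_def using surj inv_into_into[of i \<sigma> "{..<d}"] f_inv_into_f[of i \<sigma> "{..<d}"] by auto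
  obtain a b where ab: "\<forall>j<d. a j \<in> ocarrier S \<and> b j \<in> ocarrier S \<and> oless S (a j) (b j)"
    and proj: "\<And>v. (\<forall>j<d. v j \<in> ocarrier S \<and> oless S (a j) (v j) \<and> oless S (v j) (b j)) \<Longrightarrow>
        \<exists>x\<in>X. \<forall>j<d. x $ \<sigma> j = v j"
    using P unfolding proj_has_interior_def by blast
  have \<tau>_\<sigma>: "\<tau> (\<sigma> j) = j" if "j < d" for j
    unfolding \<tau>_def using d(2) that by (simp add: inv_into_f_f)
  have "y \<in> X" if y: "y \<in> ospace S" "in_box S (a \<circ> \<tau>) (b \<circ> \<tau>) y" for y
  proof -
    have "\<forall>j<d. y $ \<sigma> j \<in> ocarrier S \<and> oless S (a j) (y $ \<sigma> j) \<and> oless S (y $ \<sigma> j) (b j)"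
      using y \<tau>_\<sigma> unfolding in_box_def by (metis comp_apply ospace_nth)
    then obtain x where "x \<in> X" "\<forall>j<d. x $ \<sigma> j = y $ \<sigma> j" using proj[of "\<lambda>j. y $ \<sigma> j"] by blast
    then have "x = y" using \<tau> by (metis vec_eq_iff)
    with \<open>x \<in> X\<close> show ?thesis by simp
  qed
  moreover have "nondegenerate_box S (a \<circ> \<tau>) (b \<circ> \<tau>)"
    unfolding nondegenerate_box_def using ab \<tau>(1) by simp
  ultimately show ?thesis by blast
qed

datatype (pconsts: 'c, 'n) pexpr =
    PConst 'c
  | PVar 'n
  | PAdd "('c, 'n) pexpr" "('c, 'n) pexpr"
  | PMult "('c, 'n) pexpr" "('c, 'n) pexpr"
for map: map_pexpr

datatype ('c, 'n) formula =
    FPos "('c, 'n) pexpr"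
  | FNot "('c, 'n) formula"
  | FAnd "('c, 'n) formula" "('c, 'n) formula"

primrec peval :: "('a, 'b) ostr_scheme \<Rightarrow> ('a, 'n) pexpr \<Rightarrow> 'a ^ 'n \<Rightarrow> 'a" where
  "peval S (PConst c) x = c"
| "peval S (PVar i) x = x $ i"
| "peval S (PAdd p q) x = oadd S (peval S p x) (peval S q x)"
| "peval S (PMult p q) x = omul S (peval S p x) (peval S q x)"

primrec peval_real :: "('c \<Rightarrow> real) \<Rightarrow> ('c, 'n) pexpr \<Rightarrow> ('n \<Rightarrow> real) \<Rightarrow> real" where
  "peval_real \<kappa> (PConst c) x = \<kappa> c"
| "peval_real \<kappa> (PVar i) x = x i"
| "peval_real \<kappa> (PAdd p q) x = peval_real \<kappa> p x + peval_real \<kappa> q x"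
| "peval_real \<kappa> (PMult p q) x = peval_real \<kappa> p x * peval_real \<kappa> q x"

primrec pdegree :: "('c, 'n) pexpr \<Rightarrow> nat" where
  "pdegree (PConst c) = 0"
| "pdegree (PVar i) = 1"
| "pdegree (PAdd p q) = max (pdegree p) (pdegree q)"
| "pdegree (PMult p q) = pdegree p + pdegree q"

primrec formula_set :: "('a, 'b) ostr_scheme \<Rightarrow> ('a, 'n) formula \<Rightarrow> ('a ^ 'n) set" where
  "formula_set S (FPos e) = {x \<in> ospace S. oless S (ozero S) (peval S e x)}"
| "formula_set S (FNot f) = ospace S - formula_set S f"
| "formula_set S (FAnd f g) = formula_set S f \<inter> formula_set S g"

primrec atoms :: "('c, 'n) formula \<Rightarrow> ('c, 'n) pexpr list" where
  "atoms (FPos e) = [e]"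
| "atoms (FNot f) = atoms f"
| "atoms (FAnd f g) = atoms f @ atoms g"

definition formula_over :: "('a, 'b) ostr_scheme \<Rightarrow> ('a, 'n) formula \<Rightarrow> bool" where
  "formula_over S f \<longleftrightarrow> (\<forall>e \<in> set (atoms f). pconsts e \<subseteq> ocarrier S)"

lemma peval_real_map_pexpr: "peval_real \<kappa> (map_pexpr g id e) x = peval_real (\<kappa> \<circ> g) e x"
  by (induction e) auto

lemma polyfun_imp_peval: "p \<in> polyfun S \<Longrightarrow> \<exists>e. pconsts e \<subseteq> ocarrier S \<and> p = peval S e"
proof (induction rule: polyfun.induct)
  case (pconst c)
  show ?case by (rule exI[of _ "PConst c"]) (use pconst in auto)
next
  case (pcoord i)
  show ?case by (rule exI[of _ "PVar i"]) auto
next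
  case (padd p q)
  then obtain e\<^sub>1 e\<^sub>2 where "pconsts e\<^sub>1 \<subseteq> ocarrier S" "p = peval S e\<^sub>1"
    and "pconsts e\<^sub>2 \<subseteq> ocarrier S" "q = peval S e\<^sub>2" by blast
  then show ?case by (intro exI[of _ "PAdd e\<^sub>1 e\<^sub>2"]) auto
next
  case (pmul p q)
  then obtain e\<^sub>1 e\<^sub>2 where "pconsts e\<^sub>1 \<subseteq> ocarrier S" "p = peval S e\<^sub>1"
    and "pconsts e\<^sub>2 \<subseteq> ocarrier S" "q = peval S e\<^sub>2" by blast
  then show ?case by (intro exI[of _ "PMult e\<^sub>1 e\<^sub>2"]) auto
qed

lemma peval_in_polyfun: "pconsts e \<subseteq> ocarrier S \<Longrightarrow> peval S e \<in> polyfun S"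
proof (induction e)
  case (PConst c)
  then show ?case using polyfun.pconst[of c S] by simp
next
  case (PVar i)
  then show ?case using polyfun.pcoord by simp
next
  case (PAdd p q)
  then show ?case using polyfun.padd[of "peval S p" S "peval S q"] by simp
next
  case (PMult p q)
  then show ?case using polyfun.pmul[of "peval S p" S "peval S q"] by simp
qed

lemma semialg_imp_formula_set:
  "A \<in> semialg S \<Longrightarrow> \<exists>f. formula_over S f \<and> A = formula_set S f"
proof (induction rule: semialg.induct)
  case (sbasic p)
  then obtain e where "pconsts e \<subseteq> ocarrier S" "p = peval S e"
    using polyfun_imp_peval by blast
  then show ?case by (intro exI[of _ "FPos e"]) (auto simp: formula_over_def)
next
  case (scompl A)
  then obtain f where "formula_over S f" "A = formula_set S f" by blast
  then show ?case by (intro exI[of _ "FNot f"]) (auto simp: formula_over_def)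
next
  case (sinter A B)
  then obtain f g where "formula_over S f" "A = formula_set S f"
    and "formula_over S g" "B = formula_set S g" by blast
  then show ?case by (intro exI[of _ "FAnd f g"]) (auto simp: formula_over_def)
qed

primrec abs_bound :: "('c \<Rightarrow> real) \<Rightarrow> ('c, 'n) pexpr \<Rightarrow> real \<Rightarrow> real" where
  "abs_bound \<kappa> (PConst c) M = \<bar>\<kappa> c\<bar>"
| "abs_bound \<kappa> (PVar i) M = M"
| "abs_bound \<kappa> (PAdd p q) M = abs_bound \<kappa> p M + abs_bound \<kappa> q M"
| "abs_bound \<kappa> (PMult p q) M = abs_bound \<kappa> p M * abs_bound \<kappa> q M"

primrec lipschitz_bound :: "('c \<Rightarrow> real) \<Rightarrow> ('c, 'n) pexpr \<Rightarrow> real \<Rightarrow> real" where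
  "lipschitz_bound \<kappa> (PConst c) M = 0"
| "lipschitz_bound \<kappa> (PVar i) M = 1"
| "lipschitz_bound \<kappa> (PAdd p q) M = lipschitz_bound \<kappa> p M + lipschitz_bound \<kappa> q M"
| "lipschitz_bound \<kappa> (PMult p q) M =
     lipschitz_bound \<kappa> p M * abs_bound \<kappa> q M + abs_bound \<kappa> p M * lipschitz_bound \<kappa> q M"

lemma abs_bound_nonneg: "0 \<le> M \<Longrightarrow> 0 \<le> abs_bound \<kappa> e M"
  by (induction e) auto

lemma lipschitz_bound_nonneg: "0 \<le> M \<Longrightarrow> 0 \<le> lipschitz_bound \<kappa> e M"
  by (induction e) (auto intro!: add_nonneg_nonneg mult_nonneg_nonneg abs_bound_nonneg)

lemma abs_peval_real_le: "(\<And>i. \<bar>X i\<bar> \<le> M) \<Longrightarrow> \<bar>peval_real \<kappa> e X\<bar> \<le> abs_bound \<kappa> e M"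
proof (induction e)
  case (PAdd p q)
  then show ?case by (simp add: order_trans[OF abs_triangle_ineq add_mono])
next
  case (PMult p q)
  then show ?case by (simp add: abs_mult mult_mono)
qed auto

lemma peval_real_lipschitz:
  assumes X: "\<And>i. \<bar>X i\<bar> \<le> M" and Y: "\<And>i. \<bar>Y i\<bar> \<le> M" and XY: "\<And>i. \<bar>X i - Y i\<bar> \<le> d"
  shows "\<bar>peval_real \<kappa> e X - peval_real \<kappa> e Y\<bar> \<le> lipschitz_bound \<kappa> e M * d"
proof (induction e)
  case (PAdd p q)
  then show ?case by (simp add: distrib_right order_trans[OF abs_triangle_ineq add_mono])
next
  case (PMult p q)
  have "0 \<le> M" "0 \<le> d" using X[of undefined] XY[of undefined] by linarith+
  let ?dp = "peval_real \<kappa> p X - peval_real \<kappa> p Y" and ?dq = "peval_real \<kappa> q X - peval_real \<kappa> q Y"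
  have "peval_real \<kappa> (PMult p q) X - peval_real \<kappa> (PMult p q) Y
      = ?dp * peval_real \<kappa> q X + peval_real \<kappa> p Y * ?dq"
    by (simp add: algebra_simps)
  then have "\<bar>peval_real \<kappa> (PMult p q) X - peval_real \<kappa> (PMult p q) Y\<bar>
      \<le> \<bar>?dp\<bar> * \<bar>peval_real \<kappa> q X\<bar> + \<bar>peval_real \<kappa> p Y\<bar> * \<bar>?dq\<bar>"
    by (metis abs_mult abs_triangle_ineq)
  also have "\<dots> \<le> (lipschitz_bound \<kappa> p M * d) * abs_bound \<kappa> q M + abs_bound \<kappa> p M * (lipschitz_bound \<kappa> q M * d)"
    using PMult.IH abs_peval_real_le[OF X, of \<kappa> q] abs_peval_real_le[OF Y, of \<kappa> p]
      \<open>0 \<le> M\<close> \<open>0 \<le> d\<close> abs_bound_nonneg lipschitz_bound_nonneg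
    by (intro add_mono mult_mono) auto
  finally show ?case by (simp add: algebra_simps)
qed (use XY in auto)

section \<open>Lagrange interpolation\<close>

primrec poly_in_var :: "('c \<Rightarrow> real) \<Rightarrow> ('c, 'n) pexpr \<Rightarrow> 'n \<Rightarrow> ('n \<Rightarrow> real) \<Rightarrow> real poly" where
  "poly_in_var \<kappa> (PConst c) i Y = [:\<kappa> c:]"
| "poly_in_var \<kappa> (PVar j) i Y = (if j = i then [:0, 1:] else [:Y j:])"
| "poly_in_var \<kappa> (PAdd p q) i Y = poly_in_var \<kappa> p i Y + poly_in_var \<kappa> q i Y"
| "poly_in_var \<kappa> (PMult p q) i Y = poly_in_var \<kappa> p i Y * poly_in_var \<kappa> q i Y"

lemma poly_poly_in_var: "poly (poly_in_var \<kappa> e i Y) s = peval_real \<kappa> e (Y(i := s))"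
  by (induction e) auto

lemma degree_poly_in_var: "degree (poly_in_var \<kappa> e i Y) \<le> pdegree e"
proof (induction e)
  case (PAdd p q)
  then show ?case using order_trans[OF degree_add_le_max max.mono[OF PAdd.IH]] by simp
next
  case (PMult p q)
  then show ?case using order_trans[OF degree_mult_le add_mono[OF PMult.IH]] by simp
qed auto

definition lagrange_basis :: "(nat \<Rightarrow> real) \<Rightarrow> nat \<Rightarrow> nat \<Rightarrow> real poly" where
  "lagrange_basis s D k = (\<Prod>j\<in>{..D} - {k}. smult (inverse (s k - s j)) [:- s j, 1:])"

lemma poly_lagrange_basis:
  "poly (lagrange_basis s D k) x = (\<Prod>j\<in>{..D} - {k}. (x - s j) / (s k - s j))"
  unfolding lagrange_basis_def poly_prod
  by (rule prod.cong) (simp_all add: divide_inverse algebra_simps)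

lemma degree_lagrange_basis: "k \<le> D \<Longrightarrow> degree (lagrange_basis s D k) \<le> D"
proof -
  assume "k \<le> D"
  have "degree (lagrange_basis s D k)
      \<le> sum (degree \<circ> (\<lambda>j. smult (inverse (s k - s j)) [:- s j, 1:])) ({..D} - {k})"
    unfolding lagrange_basis_def by (rule degree_prod_sum_le) simp
  also have "\<dots> \<le> (\<Sum>j\<in>{..D} - {k}. 1)"
  proof (rule sum_mono)
    fix j
    show "(degree \<circ> (\<lambda>j. smult (inverse (s k - s j)) [:- s j, 1:])) j \<le> 1"
      using degree_smult_le[of "inverse (s k - s j)" "[:- s j, 1:]"] by simp
  qed
  also have "\<dots> \<le> D" using \<open>k \<le> D\<close> by simp
  finally show ?thesis .
qed

lemma peval_real_close:
  fixes X Y :: "'n::finite \<Rightarrow> real"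
  assumes "\<And>i. \<bar>Y i - X i\<bar> \<le> d" "d \<le> 1"
  shows "\<bar>peval_real \<kappa> e X - peval_real \<kappa> e Y\<bar> \<le> lipschitz_bound \<kappa> e ((\<Sum>i\<in>UNIV. \<bar>X i\<bar>) + 1) * d"
proof (rule peval_real_lipschitz)
  fix i
  have "\<bar>X i\<bar> \<le> (\<Sum>i\<in>UNIV. \<bar>X i\<bar>)" using member_le_sum[of i UNIV "\<lambda>i. \<bar>X i\<bar>"] by simp
  then show "\<bar>X i\<bar> \<le> (\<Sum>i\<in>UNIV. \<bar>X i\<bar>) + 1" "\<bar>Y i\<bar> \<le> (\<Sum>i\<in>UNIV. \<bar>X i\<bar>) + 1"
    "\<bar>X i - Y i\<bar> \<le> d"
    using assms(1)[of i] assms(2) by (auto simp: abs_le_iff)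
qed

lemma lagrange_interpolation:
  fixes q :: "real poly"
  assumes deg: "degree q \<le> D" and inj: "inj_on s {..D}"
  shows "poly q w = (\<Sum>k\<le>D. poly q (s k) * poly (lagrange_basis s D k) w)"
proof -
  define L where "L = (\<Sum>k\<le>D. smult (poly q (s k)) (lagrange_basis s D k))"
  have basis_at_node: "poly (lagrange_basis s D k) (s m) = (if m = k then 1 else 0)"
    if "k \<le> D" "m \<le> D" for k m
  proof (cases "m = k")
    case True
    have "(s k - s j) / (s k - s j) = 1" if "j \<in> {..D} - {k}" for j
      using inj \<open>k \<le> D\<close> that by (auto simp: inj_on_def)
    then show ?thesis unfolding poly_lagrange_basis using True by simp
  next
    case False
    then have "m \<in> {..D} - {k}" using that by auto
    then show ?thesis unfolding poly_lagrange_basis using False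
      by (simp add: prod_zero_iff) (rule bexI[of _ m], auto)
  qed
  have card_nodes: "card (s ` {..D}) = Suc D" using inj by (simp add: card_image)
  have "q = L"
  proof (rule poly_eqI_degree[of "s ` {..D}"])
    fix x assume "x \<in> s ` {..D}"
    then obtain m where m: "m \<le> D" "x = s m" by auto
    have "poly L x = (\<Sum>k\<le>D. if m = k then poly q (s k) else 0)"
      unfolding L_def poly_sum using m basis_at_node by (intro sum.cong) auto
    then show "poly q x = poly L x" using m by (simp add: sum.delta)
  next
    show "degree q < card (s ` {..D})" using deg card_nodes by simp
    have "degree L \<le> D" unfolding L_def
      by (intro degree_sum_le) (auto intro: order_trans[OF degree_smult_le] degree_lagrange_basis)
    then show "degree L < card (s ` {..D})" using card_nodes by simp
  qed
  then have "poly q w = poly L w" by simp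
  then show ?thesis unfolding L_def poly_sum by simp
qed

lemma abs_poly_le_by_nodes:
  fixes q :: "real poly"
  assumes deg: "degree q \<le> D"
    and sep: "\<And>k m. k \<le> D \<Longrightarrow> m \<le> D \<Longrightarrow> k \<noteq> m \<Longrightarrow> h \<le> \<bar>s k - s m\<bar>"
    and h: "0 < h" and nodes: "\<And>k. k \<le> D \<Longrightarrow> \<bar>s k\<bar> \<le> M" and w: "\<bar>w\<bar> \<le> M"
  shows "\<bar>poly q w\<bar> \<le> (\<Sum>k\<le>D. \<bar>poly q (s k)\<bar>) * (2 * M / h) ^ D"
proof -
  have inj: "inj_on s {..D}"
  proof (rule inj_onI, rule ccontr)
    fix k m assume "k \<in> {..D}" "m \<in> {..D}" "s k = s m" "k \<noteq> m"
    then show False using sep[of k m] h by auto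
  qed
  have "0 \<le> M" using w by linarith
  have basis_bound: "\<bar>poly (lagrange_basis s D k) w\<bar> \<le> (2 * M / h) ^ D" if "k \<le> D" for k
  proof -
    have "\<bar>poly (lagrange_basis s D k) w\<bar> = (\<Prod>j\<in>{..D} - {k}. \<bar>w - s j\<bar> / \<bar>s k - s j\<bar>)"
      unfolding poly_lagrange_basis by (simp add: abs_prod abs_divide)
    also have "\<dots> \<le> (\<Prod>j\<in>{..D} - {k}. 2 * M / h)"
    proof (rule prod_mono)
      fix j assume j: "j \<in> {..D} - {k}"
      have "\<bar>w - s j\<bar> \<le> 2 * M" using w nodes[of j] j by auto
      moreover have "h \<le> \<bar>s k - s j\<bar>" using sep[of k j] j that by simp
      ultimately have "\<bar>w - s j\<bar> / \<bar>s k - s j\<bar> \<le> 2 * M / h"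
        using h \<open>0 \<le> M\<close> by (intro frac_le) simp_all
      then show "0 \<le> \<bar>w - s j\<bar> / \<bar>s k - s j\<bar> \<and> \<bar>w - s j\<bar> / \<bar>s k - s j\<bar> \<le> 2 * M / h"
        by simp
    qed
    also have "\<dots> = (2 * M / h) ^ D" using that by simp
    finally show ?thesis .
  qed
  have "\<bar>poly q w\<bar> = \<bar>\<Sum>k\<le>D. poly q (s k) * poly (lagrange_basis s D k) w\<bar>"
    using lagrange_interpolation[OF deg inj, of w] by (rule arg_cong)
  also have "\<dots> \<le> (\<Sum>k\<le>D. \<bar>poly q (s k)\<bar> * \<bar>poly (lagrange_basis s D k) w\<bar>)"
    by (rule order_trans[OF sum_abs]) (simp add: abs_mult)
  also have "\<dots> \<le> (\<Sum>k\<le>D. \<bar>poly q (s k)\<bar> * (2 * M / h) ^ D)"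
    by (intro sum_mono mult_left_mono) (simp_all add: basis_bound)
  finally show ?thesis by (simp add: sum_distrib_right)
qed

lemma double_power_Suc_le:
  fixes r :: real
  assumes "0 \<le> r" "r \<le> 1/2"
  shows "2 * r ^ Suc N \<le> r ^ N"
proof -
  have "2 * r ^ Suc N = (2 * r) * r ^ N" by simp
  also have "\<dots> \<le> r ^ N" using assms mult_right_mono[of "2 * r" 1 "r ^ N"] by simp
  finally show ?thesis .
qed

lemma double_power_le:
  fixes r :: real
  assumes "0 \<le> r" "r \<le> 1/2" "k < n"
  shows "2 * r ^ n \<le> r ^ k"
proof -
  have "r ^ n \<le> r ^ Suc k" using assms by (intro power_decreasing) auto
  then show ?thesis using double_power_Suc_le[OF assms(1,2), of k] by linarith
qed

lemma nodes_separated: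
  fixes h \<epsilon> :: real
  assumes "0 \<le> h" "\<bar>u - (a + real k * h)\<bar> \<le> \<epsilon>" "\<bar>v - (a + real m * h)\<bar> \<le> \<epsilon>" "k \<noteq> m"
  shows "h - 2 * \<epsilon> \<le> \<bar>u - v\<bar>"
proof -
  have "1 \<le> \<bar>real k - real m\<bar>" using \<open>k \<noteq> m\<close> by (cases "k < m") auto
  then have "h \<le> \<bar>(real k - real m) * h\<bar>"
    using \<open>0 \<le> h\<close> mult_right_mono[of 1 "\<bar>real k - real m\<bar>" h] by (simp add: abs_mult)
  moreover have "(real k - real m) * h = (u - v) - (u - (a + real k * h)) + (v - (a + real m * h))"
    by (simp add: algebra_simps)
  ultimately show ?thesis using assms(2,3) by linarith
qed

lemma perturbed_nodes_separated:
  fixes r h :: real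
  assumes r: "0 < r" "r \<le> 1/4" and h: "r ^ Suc N \<le> h"
    and "\<bar>u - (a + real k * h)\<bar> \<le> r ^ (N + 3)" "\<bar>v - (a + real m * h)\<bar> \<le> r ^ (N + 3)" "k \<noteq> m"
  shows "r ^ (N + 2) \<le> \<bar>u - v\<bar>"
proof -
  have "r ^ (N + 2) + 2 * r ^ (N + 3) \<le> r ^ Suc N"
  proof -
    have "r ^ (N + 2) + 2 * r ^ (N + 3) = r ^ Suc N * (r + 2 * r * r)"
      by (simp add: algebra_simps power_add power2_eq_square power3_eq_cube)
    also have "\<dots> \<le> r ^ Suc N * 1"
      using r mult_mono[of r "1/4" r "1/4"] by (intro mult_left_mono) auto
    finally show ?thesis by simp
  qed
  moreover have "0 \<le> h" using h r by (meson order_trans zero_le_power less_imp_le)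
  ultimately show ?thesis using nodes_separated[OF _ assms(4-6)] h by linarith
qed

lemma abs_poly_le_at_perturbed_nodes:
  fixes q :: "real poly"
  assumes deg: "degree q \<le> D" and r: "0 < r" "r * (real D + 4) < 1" and gap: "r ^ N < B - A"
    and nodes: "\<And>k. k \<le> D \<Longrightarrow>
      \<bar>u k - (A + real (Suc k) / (real D + 2) * (B - A))\<bar> \<le> r ^ (N + 3)"
  shows "\<bar>poly q w\<bar> \<le> (\<Sum>k\<le>D. \<bar>poly q (u k)\<bar>) * (2 * (\<bar>w\<bar> + (\<Sum>k\<le>D. \<bar>u k\<bar>)) / r ^ (N + 2)) ^ D"
proof -
  define h where "h = (B - A) / (real D + 2)"
  have "0 \<le> r * real D" using r by simp
  then have r': "r \<le> 1/4" "r * (real D + 2) \<le> 1"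
    using r unfolding distrib_left by linarith+
  have "r ^ Suc N * (real D + 2) \<le> r ^ N"
    using r mult_left_mono[OF r'(2), of "r ^ N"] by (simp add: algebra_simps)
  then have h: "r ^ Suc N \<le> h" using gap unfolding h_def by (simp add: field_simps)
  have close: "\<bar>u k - (A + real (Suc k) * h)\<bar> \<le> r ^ (N + 3)" if "k \<le> D" for k
    using nodes[OF that] unfolding h_def by (simp add: field_simps)
  show ?thesis
  proof (rule abs_poly_le_by_nodes[OF deg])
    show "r ^ (N + 2) \<le> \<bar>u k - u m\<bar>" if "k \<le> D" "m \<le> D" "k \<noteq> m" for k m
      using perturbed_nodes_separated[OF r(1) r'(1) h close close] that by simp
    show "\<bar>u k\<bar> \<le> \<bar>w\<bar> + (\<Sum>k\<le>D. \<bar>u k\<bar>)" if "k \<le> D" for k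
      using member_le_sum[of k "{..D}" "\<lambda>k. \<bar>u k\<bar>"] that by simp
  qed (use r in \<open>simp_all add: sum_nonneg\<close>)
qed

locale infinitesimal_ultrafilter =
  fixes U :: "complex set set"
  assumes ultrafilter: "is_ultrafilter U" and nonprincipal: "nonprincipal U"
    and converges_to_0: "converges_to_0 U"
begin

definition UF :: "complex filter" where
  "UF = Abs_filter (\<lambda>P. {z. P z} \<in> U)"

lemma eventually_UF: "eventually P UF \<longleftrightarrow> {z. P z} \<in> U"
proof -
  have "is_filter (\<lambda>P. {z. P z} \<in> U)"
  proof
    show "{z. True} \<in> U" using ultrafilter by (simp add: is_ultrafilter_def)
    show "{z. P z \<and> Q z} \<in> U" if "{z. P z} \<in> U" "{z. Q z} \<in> U" for P Q
      using ultrafilter that unfolding is_ultrafilter_def by (metis Collect_conj_eq)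
    show "{z. Q z} \<in> U" if "\<forall>z. P z \<longrightarrow> Q z" "{z. P z} \<in> U" for P Q
      using ultrafilter that unfolding is_ultrafilter_def by (metis Collect_mono)
  qed
  then show ?thesis unfolding UF_def by (rule eventually_Abs_filter)
qed

lemma UF_neq_bot: "UF \<noteq> bot"
  using ultrafilter by (simp add: eventually_False[symmetric] eventually_UF is_ultrafilter_def)

lemma eventually_UF_not_iff: "(\<forall>\<^sub>F z in UF. \<not> P z) \<longleftrightarrow> \<not> eventually P UF"
proof
  show "\<not> eventually P UF" if "\<forall>\<^sub>F z in UF. \<not> P z"
  proof
    assume "eventually P UF"
    with that have "\<forall>\<^sub>F z in UF. False" by eventually_elim simp
    with UF_neq_bot show False by (simp add: eventually_False)
  qed
  show "\<forall>\<^sub>F z in UF. \<not> P z" if "\<not> eventually P UF"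
    using that ultrafilter unfolding eventually_UF is_ultrafilter_def
    by (metis Collect_neg_eq Collect_mem_eq)
qed

lemma eventually_UF_small: "0 < e \<Longrightarrow> \<forall>\<^sub>F z in UF. 0 < cmod z \<and> cmod z < e"
proof -
  assume "0 < e"
  have "{0::complex} \<notin> U" using nonprincipal unfolding nonprincipal_def by simp
  then have "\<forall>\<^sub>F z in UF. z \<noteq> 0"
    using eventually_UF_not_iff[of "\<lambda>z. z = 0"] by (simp add: eventually_UF)
  moreover have "\<forall>\<^sub>F z in UF. cmod z < e"
    using converges_to_0 \<open>0 < e\<close> by (simp add: converges_to_0_def eventually_UF)
  ultimately show ?thesis by eventually_elim simp
qed

lemma eventually_UF_quarter: "\<forall>\<^sub>F z in UF. 0 < cmod z \<and> cmod z \<le> 1/4"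
  using eventually_UF_small[of "1/4"] by (rule eventually_mono) auto

end

context infinitesimal_ultrafilter
begin

definition t_bounded :: "(complex \<Rightarrow> real) \<Rightarrow> bool" where
  "t_bounded f \<longleftrightarrow> (\<exists>N::nat. \<forall>\<^sub>F z in UF. \<bar>f z\<bar> \<le> inverse (cmod z ^ N))"

definition t_negligible :: "(complex \<Rightarrow> real) \<Rightarrow> bool" where
  "t_negligible f \<longleftrightarrow> (\<forall>N::nat. \<forall>\<^sub>F z in UF. \<bar>f z\<bar> \<le> cmod z ^ N)"

definition t_positive :: "(complex \<Rightarrow> real) \<Rightarrow> bool" where
  "t_positive f \<longleftrightarrow> (\<exists>N::nat. \<forall>\<^sub>F z in UF. cmod z ^ N < f z)"

lemma t_negligibleD: "t_negligible f \<Longrightarrow> \<forall>\<^sub>F z in UF. \<bar>f z\<bar> \<le> cmod z ^ N"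
  unfolding t_negligible_def by blast

lemma t_bounded_le:
  assumes "t_bounded f" "\<forall>\<^sub>F z in UF. \<bar>g z\<bar> \<le> \<bar>f z\<bar>"
  shows "t_bounded g"
proof -
  obtain N where "\<forall>\<^sub>F z in UF. \<bar>f z\<bar> \<le> inverse (cmod z ^ N)"
    using assms(1) unfolding t_bounded_def by blast
  with assms(2) have "\<forall>\<^sub>F z in UF. \<bar>g z\<bar> \<le> inverse (cmod z ^ N)" by eventually_elim simp
  then show ?thesis unfolding t_bounded_def by blast
qed

lemma t_negligible_le:
  assumes "t_negligible f" "\<forall>\<^sub>F z in UF. \<bar>g z\<bar> \<le> \<bar>f z\<bar>"
  shows "t_negligible g"
  unfolding t_negligible_def
proof
  fix N
  from assms(2) t_negligibleD[OF assms(1), of N]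
  show "\<forall>\<^sub>F z in UF. \<bar>g z\<bar> \<le> cmod z ^ N" by eventually_elim simp
qed

lemma t_bounded_cong: "(\<forall>\<^sub>F z in UF. f z = g z) \<Longrightarrow> t_bounded f \<longleftrightarrow> t_bounded g"
  by (intro iffI; erule t_bounded_le; erule eventually_mono; simp)

lemma t_negligible_cong: "(\<forall>\<^sub>F z in UF. f z = g z) \<Longrightarrow> t_negligible f \<longleftrightarrow> t_negligible g"
  by (intro iffI; erule t_negligible_le; erule eventually_mono; simp)

lemma t_bounded_const: "t_bounded (\<lambda>z. c)"
proof -
  have "\<forall>\<^sub>F z in UF. 0 < cmod z \<and> cmod z < 1 / (\<bar>c\<bar> + 1)"
    by (rule eventually_UF_small) (simp add: add_pos_nonneg)
  then have "\<forall>\<^sub>F z in UF. \<bar>c\<bar> \<le> inverse (cmod z ^ 1)"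
  proof (rule eventually_mono)
    fix z assume z: "0 < cmod z \<and> cmod z < 1 / (\<bar>c\<bar> + 1)"
    then have "cmod z * (\<bar>c\<bar> + 1) < 1" by (simp add: pos_less_divide_eq)
    moreover have "cmod z * \<bar>c\<bar> \<le> cmod z * (\<bar>c\<bar> + 1)" using z by simp
    ultimately have "cmod z * \<bar>c\<bar> \<le> 1" by linarith
    with z show "\<bar>c\<bar> \<le> inverse (cmod z ^ 1)" by (simp add: field_simps)
  qed
  then show ?thesis unfolding t_bounded_def by blast
qed

lemma t_bounded_add:
  assumes "t_bounded f" "t_bounded g"
  shows "t_bounded (\<lambda>z. f z + g z)"
proof -
  obtain N M where N: "\<forall>\<^sub>F z in UF. \<bar>f z\<bar> \<le> inverse (cmod z ^ N)"
    and M: "\<forall>\<^sub>F z in UF. \<bar>g z\<bar> \<le> inverse (cmod z ^ M)"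
    using assms unfolding t_bounded_def by blast
  from eventually_UF_quarter N M
  have "\<forall>\<^sub>F z in UF. \<bar>f z + g z\<bar> \<le> inverse (cmod z ^ Suc (max N M))"
  proof eventually_elim
    case (elim z)
    let ?r = "cmod z"
    have "inverse (?r ^ N) \<le> inverse (?r ^ max N M)" "inverse (?r ^ M) \<le> inverse (?r ^ max N M)"
      using elim by (auto intro!: le_imp_inverse_le power_decreasing)
    moreover have "2 * inverse (?r ^ max N M) \<le> inverse (?r ^ Suc (max N M))"
      using double_power_Suc_le[of ?r "max N M"] elim by (simp add: field_simps)
    ultimately show ?case using elim by linarith
  qed
  then show ?thesis unfolding t_bounded_def by blast
qed

lemma t_bounded_mult:
  assumes "t_bounded f" "t_bounded g"
  shows "t_bounded (\<lambda>z. f z * g z)"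
proof -
  obtain N M where N: "\<forall>\<^sub>F z in UF. \<bar>f z\<bar> \<le> inverse (cmod z ^ N)"
    and M: "\<forall>\<^sub>F z in UF. \<bar>g z\<bar> \<le> inverse (cmod z ^ M)"
    using assms unfolding t_bounded_def by blast
  from N M have "\<forall>\<^sub>F z in UF. \<bar>f z * g z\<bar> \<le> inverse (cmod z ^ (N + M))"
  proof eventually_elim
    case (elim z)
    then have "\<bar>f z\<bar> * \<bar>g z\<bar> \<le> inverse (cmod z ^ N) * inverse (cmod z ^ M)"
      by (intro mult_mono) auto
    then show ?case by (simp add: abs_mult power_add)
  qed
  then show ?thesis unfolding t_bounded_def by blast
qed

lemma t_bounded_abs: "t_bounded f \<Longrightarrow> t_bounded (\<lambda>z. \<bar>f z\<bar>)"
  by (erule t_bounded_le) simp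

lemma t_bounded_diff: "t_bounded f \<Longrightarrow> t_bounded g \<Longrightarrow> t_bounded (\<lambda>z. f z - g z)"
  using t_bounded_add[of f "\<lambda>z. - g z"] t_bounded_le[of g "\<lambda>z. - g z"] by simp

lemma t_bounded_sum:
  "finite I \<Longrightarrow> (\<And>i. i \<in> I \<Longrightarrow> t_bounded (f i)) \<Longrightarrow> t_bounded (\<lambda>z. \<Sum>i\<in>I. f i z)"
  by (induction I rule: finite_induct) (auto intro: t_bounded_add t_bounded_const)

lemma t_bounded_power: "t_bounded f \<Longrightarrow> t_bounded (\<lambda>z. f z ^ k)"
  by (induction k) (auto intro: t_bounded_mult t_bounded_const)

lemma t_bounded_inverse_power_norm: "t_bounded (\<lambda>z. inverse (cmod z ^ N))"
  unfolding t_bounded_def by (rule exI[of _ N]) simp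

lemma t_bounded_power_norm: "t_bounded (\<lambda>z. cmod z ^ N)"
  using eventually_UF_quarter
  by (intro t_bounded_le[OF t_bounded_const[of 1]]) (auto elim!: eventually_mono intro: power_le_one)

lemma t_negligible_add:
  assumes "t_negligible f" "t_negligible g"
  shows "t_negligible (\<lambda>z. f z + g z)"
  unfolding t_negligible_def
proof
  fix N
  from eventually_UF_quarter t_negligibleD[OF assms(1), of "Suc N"] t_negligibleD[OF assms(2), of "Suc N"]
  show "\<forall>\<^sub>F z in UF. \<bar>f z + g z\<bar> \<le> cmod z ^ N"
  proof eventually_elim
    case (elim z)
    then show ?case using double_power_Suc_le[of "cmod z" N] by linarith
  qed
qed

lemma t_negligible_mult:
  assumes "t_negligible f" "t_bounded g"
  shows "t_negligible (\<lambda>z. f z * g z)"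
  unfolding t_negligible_def
proof
  fix N
  obtain M where M: "\<forall>\<^sub>F z in UF. \<bar>g z\<bar> \<le> inverse (cmod z ^ M)"
    using assms(2) unfolding t_bounded_def by blast
  from eventually_UF_quarter t_negligibleD[OF assms(1), of "N + M"] M
  show "\<forall>\<^sub>F z in UF. \<bar>f z * g z\<bar> \<le> cmod z ^ N"
  proof eventually_elim
    case (elim z)
    then have "\<bar>f z\<bar> * \<bar>g z\<bar> \<le> cmod z ^ (N + M) * inverse (cmod z ^ M)"
      by (intro mult_mono) auto
    also have "\<dots> = cmod z ^ N" using elim by (simp add: power_add)
    finally show ?case by (simp add: abs_mult)
  qed
qed

lemma t_negligible_mult': "t_bounded g \<Longrightarrow> t_negligible f \<Longrightarrow> t_negligible (\<lambda>z. g z * f z)"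
  using t_negligible_mult[of f g] by (simp add: mult.commute)

lemma t_negligible_uminus: "t_negligible f \<Longrightarrow> t_negligible (\<lambda>z. - f z)"
  by (erule t_negligible_le) simp

lemma t_negligible_abs: "t_negligible f \<Longrightarrow> t_negligible (\<lambda>z. \<bar>f z\<bar>)"
  by (erule t_negligible_le) simp

lemma t_negligible_diff: "t_negligible f \<Longrightarrow> t_negligible g \<Longrightarrow> t_negligible (\<lambda>z. f z - g z)"
  using t_negligible_add[OF _ t_negligible_uminus, of f g] by simp

lemma t_negligible_zero: "t_negligible (\<lambda>z. 0)"
  unfolding t_negligible_def by simp

lemma t_negligible_sum:
  "finite I \<Longrightarrow> (\<And>i. i \<in> I \<Longrightarrow> t_negligible (f i)) \<Longrightarrow> t_negligible (\<lambda>z. \<Sum>i\<in>I. f i z)"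
  by (induction I rule: finite_induct) (auto intro: t_negligible_add t_negligible_zero)

lemma not_t_negligible_iff: "\<not> t_negligible f \<longleftrightarrow> (\<exists>N. \<forall>\<^sub>F z in UF. cmod z ^ N < \<bar>f z\<bar>)"
  unfolding t_negligible_def not_le[symmetric] eventually_UF_not_iff by blast

lemma t_positive_imp_eventually_pos: "t_positive f \<Longrightarrow> \<forall>\<^sub>F z in UF. 0 < f z"
  unfolding t_positive_def by (auto elim!: eventually_mono intro: order.strict_trans1[rotated])

lemma t_positive_imp_not_t_negligible: "t_positive f \<Longrightarrow> \<not> t_negligible f"
proof -
  assume "t_positive f"
  then obtain N where "\<forall>\<^sub>F z in UF. cmod z ^ N < f z" unfolding t_positive_def by blast
  then have "\<forall>\<^sub>F z in UF. cmod z ^ N < \<bar>f z\<bar>" by (rule eventually_mono) simp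
  then show ?thesis unfolding not_t_negligible_iff by blast
qed

lemma t_positive_iff: "\<not> t_negligible f \<Longrightarrow> t_positive f \<longleftrightarrow> (\<forall>\<^sub>F z in UF. 0 < f z)"
proof
  assume "\<not> t_negligible f" and pos: "\<forall>\<^sub>F z in UF. 0 < f z"
  then obtain N where "\<forall>\<^sub>F z in UF. cmod z ^ N < \<bar>f z\<bar>"
    using not_t_negligible_iff by blast
  with pos have "\<forall>\<^sub>F z in UF. cmod z ^ N < f z" by eventually_elim simp
  then show "t_positive f" unfolding t_positive_def by blast
qed (rule t_positive_imp_eventually_pos)

lemma t_positive_add_t_negligible:
  assumes "t_positive f" "t_negligible g"
  shows "t_positive (\<lambda>z. f z + g z)"
proof -
  obtain N where N: "\<forall>\<^sub>F z in UF. cmod z ^ N < f z" using assms(1) unfolding t_positive_def by blast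
  from eventually_UF_quarter N t_negligibleD[OF assms(2), of "Suc N"]
  have "\<forall>\<^sub>F z in UF. cmod z ^ Suc N < f z + g z"
  proof eventually_elim
    case (elim z)
    then show ?case using double_power_Suc_le[of "cmod z" N] by linarith
  qed
  then show ?thesis unfolding t_positive_def by blast
qed

lemma t_positive_cong: "t_positive f \<Longrightarrow> t_negligible (\<lambda>z. g z - f z) \<Longrightarrow> t_positive g"
  using t_positive_add_t_negligible[of f "\<lambda>z. g z - f z"] by simp

lemma t_positive_cmult:
  assumes "0 < c" "t_positive f"
  shows "t_positive (\<lambda>z. c * f z)"
proof -
  obtain N where N: "\<forall>\<^sub>F z in UF. cmod z ^ N < f z" using assms(2) unfolding t_positive_def by blast
  have "\<forall>\<^sub>F z in UF. 0 < cmod z \<and> cmod z < min c 1"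
    using \<open>0 < c\<close> by (intro eventually_UF_small) simp
  from this N have "\<forall>\<^sub>F z in UF. cmod z ^ Suc N < c * f z"
  proof eventually_elim
    case (elim z)
    then have "cmod z * cmod z ^ N \<le> c * cmod z ^ N" by (intro mult_right_mono) auto
    also have "\<dots> < c * f z" using elim \<open>0 < c\<close> by simp
    finally show ?case by simp
  qed
  then show ?thesis unfolding t_positive_def by blast
qed

lemma t_positive_power_norm: "t_positive (\<lambda>z. cmod z ^ N)"
proof -
  from eventually_UF_quarter have "\<forall>\<^sub>F z in UF. cmod z ^ Suc N < cmod z ^ N"
  proof eventually_elim
    case (elim z)
    then show ?case using double_power_Suc_le[of "cmod z" N] by simp
  qed
  then show ?thesis unfolding t_positive_def by blast
qed

end

context infinitesimal_ultrafilter
begin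

abbreviation HS :: "hstar ostr" where "HS \<equiv> hstar_str U"
abbreviation RS :: "rfield ostr" where "RS \<equiv> R_str U"

lemma ueq_iff_eventually: "(f, g) \<in> ueq U \<longleftrightarrow> (\<forall>\<^sub>F z in UF. f z = g z)"
  unfolding ueq_def eventually_UF by simp

lemma equiv_ueq: "equiv UNIV (ueq U)"
proof (rule equivI)
  show "refl (ueq U)" unfolding refl_on_def ueq_iff_eventually by simp
  show "sym (ueq U)" unfolding sym_def ueq_iff_eventually by (auto elim: eventually_mono)
  show "trans (ueq U)" unfolding trans_def ueq_iff_eventually
    by (auto elim: eventually_elim2)
qed simp

lemma hcls_eq_iff: "hcls U f = hcls U g \<longleftrightarrow> (\<forall>\<^sub>F z in UF. f z = g z)"
  unfolding hcls_def using eq_equiv_class_iff[OF equiv_ueq, of f g] ueq_iff_eventually by simp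

lemma eventually_hrep_hcls: "\<forall>\<^sub>F z in UF. hrep (hcls U f) z = f z"
proof -
  have "f \<in> hcls U f" unfolding hcls_def using equiv_class_self[OF equiv_ueq, of f] by simp
  then have "hrep (hcls U f) \<in> hcls U f" unfolding hrep_def by (rule someI[where P="\<lambda>g. g \<in> hcls U f"])
  then have "(f, hrep (hcls U f)) \<in> ueq U" unfolding hcls_def by simp
  then show ?thesis unfolding ueq_iff_eventually by (rule eventually_mono) simp
qed

lemma hcls_in_quotient: "hcls U f \<in> UNIV // ueq U"
  unfolding hcls_def quotient_def by blast

lemma hcls_hrep: "a \<in> UNIV // ueq U \<Longrightarrow> hcls U (hrep a) = a"
proof -
  assume "a \<in> UNIV // ueq U"
  then obtain f where "a = hcls U f" unfolding quotient_def hcls_def by blast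
  then show ?thesis by (simp add: hcls_eq_iff eventually_hrep_hcls)
qed

lemma H_carrier: "ocarrier HS = UNIV // ueq U"
  by (simp add: hstar_str_def)

lemma H_ops:
  "ozero HS = hcls U (\<lambda>z. 0)" "oone HS = hcls U (\<lambda>z. 1)"
  "oadd HS a b = hcls U (\<lambda>z. hrep a z + hrep b z)"
  "omul HS a b = hcls U (\<lambda>z. hrep a z * hrep b z)"
  "oless HS a b \<longleftrightarrow> (\<forall>\<^sub>F z in UF. hrep a z < hrep b z)"
  by (simp_all add: hstar_str_def eventually_UF)

lemma H_less_hcls_iff: "oless HS (hcls U f) (hcls U g) \<longleftrightarrow> (\<forall>\<^sub>F z in UF. f z < g z)"
proof -
  from eventually_hrep_hcls[of f] eventually_hrep_hcls[of g]
  have "\<forall>\<^sub>F z in UF. (hrep (hcls U f) z < hrep (hcls U g) z) = (f z < g z)" by eventually_elim simp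
  then show ?thesis unfolding H_ops by (rule eventually_subst)
qed

lemma H_less_nth_iff:
  assumes "x \<in> ospace HS"
  shows "oless HS (hcls U f) (x $ i) \<longleftrightarrow> (\<forall>\<^sub>F z in UF. f z < hrep (x $ i) z)"
    and "oless HS (x $ i) (hcls U f) \<longleftrightarrow> (\<forall>\<^sub>F z in UF. hrep (x $ i) z < f z)"
  using H_less_hcls_iff[of f "hrep (x $ i)"] H_less_hcls_iff[of "hrep (x $ i)" f]
    hcls_hrep[OF ospace_nth[OF assms, unfolded H_carrier]] by simp_all

lemma tbounded_iff_t_bounded: "tbounded U a \<longleftrightarrow> t_bounded (hrep a)"
  unfolding tbounded_def t_bounded_def eventually_UF by simp

lemma tnegligible_iff_t_negligible: "tnegligible U a \<longleftrightarrow> t_negligible (hrep a)"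
  unfolding tnegligible_def t_negligible_def eventually_UF by simp

lemma hcls_in_Ar_iff: "hcls U f \<in> Ar U \<longleftrightarrow> t_bounded f"
  unfolding Ar_def using hcls_in_quotient tbounded_iff_t_bounded t_bounded_cong[OF eventually_hrep_hcls]
  by simp

lemma Ar_imp_t_bounded: "a \<in> Ar U \<Longrightarrow> t_bounded (hrep a)"
  unfolding Ar_def tbounded_iff_t_bounded by simp

lemma Ar_subset_H_carrier: "Ar U \<subseteq> ocarrier HS"
  unfolding Ar_def H_carrier by auto

lemma req_iff:
  "(a, b) \<in> req U \<longleftrightarrow> a \<in> Ar U \<and> b \<in> Ar U \<and> t_negligible (\<lambda>z. hrep a z - hrep b z)"
  unfolding req_def using tnegligible_iff_t_negligible t_negligible_cong[OF eventually_hrep_hcls] by simp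

lemma equiv_req: "equiv (Ar U) (req U)"
proof (rule equivI)
  show "refl_on (Ar U) (req U)"
    unfolding refl_on_def by (auto simp: req_iff t_negligible_zero)
  show "sym (req U)"
    unfolding sym_def req_iff using t_negligible_uminus by fastforce
  show "trans (req U)"
    unfolding trans_def req_iff using t_negligible_add by fastforce
qed (auto simp: req_iff)

lemma rrep_in_Ar: "x \<in> Ar U // req U \<Longrightarrow> rrep x \<in> Ar U \<and> rcls U (rrep x) = x"
proof -
  assume "x \<in> Ar U // req U"
  then obtain a where a: "a \<in> Ar U" "x = req U `` {a}" unfolding quotient_def by blast
  then have "a \<in> x" using equiv_class_self[OF equiv_req a(1)] by simp
  then have "rrep x \<in> x" unfolding rrep_def by (rule someI[where P="\<lambda>b. b \<in> x"])
  then have "(a, rrep x) \<in> req U" using a by simp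
  then have "rrep x \<in> Ar U" by (simp add: req_iff)
  moreover have "x = req U `` {rrep x}"
    using a equiv_class_eq[OF equiv_req \<open>(a, rrep x) \<in> req U\<close>] by simp
  ultimately show ?thesis unfolding rcls_def by simp
qed

definition resid :: "(complex \<Rightarrow> real) \<Rightarrow> rfield" where
  "resid f = rcls U (hcls U f)"

definition lift :: "rfield \<Rightarrow> complex \<Rightarrow> real" where
  "lift x = hrep (rrep x)"

lemma R_carrier: "ocarrier RS = Ar U // req U"
  by (simp add: R_str_def)

lemma resid_eq_iff:
  assumes "t_bounded f" "t_bounded g"
  shows "resid f = resid g \<longleftrightarrow> t_negligible (\<lambda>z. f z - g z)"
proof -
  have "resid f = resid g \<longleftrightarrow> (hcls U f, hcls U g) \<in> req U"
    unfolding resid_def rcls_def using eq_equiv_class_iff[OF equiv_req] assms hcls_in_Ar_iff by blast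
  also have "\<dots> \<longleftrightarrow> t_negligible (\<lambda>z. hrep (hcls U f) z - hrep (hcls U g) z)"
    using assms hcls_in_Ar_iff req_iff by simp
  also have "\<dots> \<longleftrightarrow> t_negligible (\<lambda>z. f z - g z)"
  proof (rule t_negligible_cong)
    from eventually_hrep_hcls[of f] eventually_hrep_hcls[of g]
    show "\<forall>\<^sub>F z in UF. hrep (hcls U f) z - hrep (hcls U g) z = f z - g z" by eventually_elim simp
  qed
  finally show ?thesis .
qed

lemma resid_in_carrier: "t_bounded f \<Longrightarrow> resid f \<in> ocarrier RS"
  unfolding R_carrier resid_def rcls_def by (simp add: hcls_in_Ar_iff quotientI)

lemma t_bounded_lift: "x \<in> ocarrier RS \<Longrightarrow> t_bounded (lift x)"
  unfolding R_carrier lift_def using rrep_in_Ar Ar_imp_t_bounded by blast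

lemma resid_lift: "x \<in> ocarrier RS \<Longrightarrow> resid (lift x) = x"
  unfolding R_carrier resid_def lift_def Ar_def
  using rrep_in_Ar hcls_hrep by (metis (no_types, lifting) Ar_def mem_Collect_eq)

lemma lift_resid: "t_bounded f \<Longrightarrow> t_negligible (\<lambda>z. lift (resid f) z - f z)"
  using resid_eq_iff resid_in_carrier resid_lift t_bounded_lift by metis

lemma R_ops:
  "ozero RS = resid (\<lambda>z. 0)" "oone RS = resid (\<lambda>z. 1)"
  "oadd RS x y = resid (\<lambda>z. lift x z + lift y z)"
  "omul RS x y = resid (\<lambda>z. lift x z * lift y z)"
  "oless RS x y \<longleftrightarrow> x \<noteq> y \<and> (\<forall>\<^sub>F z in UF. lift x z < lift y z)"
  by (simp_all add: R_str_def hstar_str_def resid_def lift_def eventually_UF)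

lemma R_less_iff:
  assumes "x \<in> ocarrier RS" "y \<in> ocarrier RS"
  shows "oless RS x y \<longleftrightarrow> t_positive (\<lambda>z. lift y z - lift x z)"
proof -
  have "x = y \<longleftrightarrow> t_negligible (\<lambda>z. lift y z - lift x z)"
    using resid_eq_iff[OF t_bounded_lift t_bounded_lift] resid_lift assms by metis
  moreover have "(\<forall>\<^sub>F z in UF. lift x z < lift y z) \<longleftrightarrow> (\<forall>\<^sub>F z in UF. 0 < lift y z - lift x z)"
    by simp
  ultimately show ?thesis
    unfolding R_ops using t_positive_iff t_positive_imp_not_t_negligible by blast
qed

lemma R_less_resid_iff:
  assumes f: "t_bounded f" and g: "t_bounded g"
  shows "oless RS (resid f) (resid g) \<longleftrightarrow> t_positive (\<lambda>z. g z - f z)"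
proof -
  have "t_negligible (\<lambda>z. (lift (resid g) z - lift (resid f) z) - (g z - f z))"
    using t_negligible_diff[OF lift_resid[OF g] lift_resid[OF f]] by (simp add: algebra_simps)
  moreover from t_negligible_uminus[OF this]
  have "t_negligible (\<lambda>z. (g z - f z) - (lift (resid g) z - lift (resid f) z))"
    by (simp add: algebra_simps)
  ultimately show ?thesis
    using R_less_iff[OF resid_in_carrier[OF f] resid_in_carrier[OF g]]
      t_positive_cong[of "\<lambda>z. lift (resid g) z - lift (resid f) z" "\<lambda>z. g z - f z"]
      t_positive_cong[of "\<lambda>z. g z - f z" "\<lambda>z. lift (resid g) z - lift (resid f) z"]
    by blast
qed

lemma R_between:
  assumes a: "a \<in> ocarrier RS" and b: "b \<in> ocarrier RS" and ab: "oless RS a b"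
    and s: "0 < s" "s < 1"
  defines "c \<equiv> resid (\<lambda>z. lift a z + s * (lift b z - lift a z))"
  shows "c \<in> ocarrier RS \<and> oless RS a c \<and> oless RS c b"
proof -
  have bounded: "t_bounded (\<lambda>z. lift a z + s * (lift b z - lift a z))"
    using a b by (intro t_bounded_add t_bounded_mult t_bounded_const t_bounded_diff t_bounded_lift)
  have gap: "t_positive (\<lambda>z. lift b z - lift a z)" using R_less_iff a b ab by blast
  have "t_positive (\<lambda>z. (lift a z + s * (lift b z - lift a z)) - lift a z)"
    using t_positive_cmult[OF s(1) gap] by simp
  moreover have "t_positive (\<lambda>z. lift b z - (lift a z + s * (lift b z - lift a z)))"
    using t_positive_cmult[OF _ gap, of "1 - s"] s by (simp add: algebra_simps)
  ultimately show ?thesis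
    unfolding c_def
    using R_less_resid_iff[OF t_bounded_lift[OF a] bounded] R_less_resid_iff[OF bounded t_bounded_lift[OF b]]
      resid_lift[OF a] resid_lift[OF b] resid_in_carrier[OF bounded]
    by simp
qed

definition reduce :: "hstar ^ 'n \<Rightarrow> rfield ^ 'n" where
  "reduce x = (\<chi> i. rcls U (x $ i))"

lemma reduce_set_eq_image: "reduce_set U E = reduce ` E"
  unfolding reduce_set_def reduce_def ..

lemma rcls_eq_resid: "a \<in> Ar U \<Longrightarrow> rcls U a = resid (hrep a)"
  unfolding resid_def Ar_def using hcls_hrep by auto

end

context infinitesimal_ultrafilter
begin

lemma H_add_hcls: "oadd HS (hcls U f) (hcls U g) = hcls U (\<lambda>z. f z + g z)"
  unfolding H_ops hcls_eq_iff using eventually_hrep_hcls[of f] eventually_hrep_hcls[of g]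
  by eventually_elim simp

lemma H_mult_hcls: "omul HS (hcls U f) (hcls U g) = hcls U (\<lambda>z. f z * g z)"
  unfolding H_ops hcls_eq_iff using eventually_hrep_hcls[of f] eventually_hrep_hcls[of g]
  by eventually_elim simp

definition rep_eval :: "(hstar, 'n) pexpr \<Rightarrow> hstar ^ 'n \<Rightarrow> complex \<Rightarrow> real" where
  "rep_eval e x z = peval_real (\<lambda>c. hrep c z) e (\<lambda>i. hrep (x $ i) z)"

lemma peval_H:
  assumes "pconsts e \<subseteq> ocarrier HS" "x \<in> ospace HS"
  shows "peval HS e x = hcls U (rep_eval e x)"
  using assms(1)
proof (induction e)
  case (PConst c)
  then show ?case using hcls_hrep by (simp add: H_carrier rep_eval_def)
next
  case (PVar i)
  then show ?case using hcls_hrep ospace_nth[OF assms(2)] by (simp add: H_carrier rep_eval_def)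
next
  case (PAdd p q)
  then show ?case by (simp add: H_add_hcls rep_eval_def)
next
  case (PMult p q)
  then show ?case by (simp add: H_mult_hcls rep_eval_def)
qed

lemma R_add_resid:
  assumes f: "t_bounded f" and g: "t_bounded g"
  shows "oadd RS (resid f) (resid g) = resid (\<lambda>z. f z + g z)"
proof -
  have "t_negligible (\<lambda>z. (lift (resid f) z + lift (resid g) z) - (f z + g z))"
    using t_negligible_add[OF lift_resid[OF f] lift_resid[OF g]] by (simp add: algebra_simps)
  then show ?thesis
    unfolding R_ops using f g by (subst resid_eq_iff) (auto intro: t_bounded_add t_bounded_lift resid_in_carrier)
qed

lemma R_mult_resid:
  assumes f: "t_bounded f" and g: "t_bounded g"
  shows "omul RS (resid f) (resid g) = resid (\<lambda>z. f z * g z)"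
proof -
  have bounded: "t_bounded (lift (resid f))" "t_bounded (lift (resid g))"
    using f g by (auto intro: t_bounded_lift resid_in_carrier)
  have "t_negligible (\<lambda>z. (lift (resid f) z - f z) * lift (resid g) z
      + f z * (lift (resid g) z - g z))"
    by (intro t_negligible_add t_negligible_mult t_negligible_mult' lift_resid f g bounded)
  then have "t_negligible (\<lambda>z. (lift (resid f) z * lift (resid g) z) - (f z * g z))"
    by (simp add: algebra_simps)
  then show ?thesis
    unfolding R_ops using f g bounded by (subst resid_eq_iff) (auto intro: t_bounded_mult)
qed

lemma t_bounded_peval_real_lift:
  assumes "pconsts e \<subseteq> ocarrier RS" "\<And>i. t_bounded (Y i)"
  shows "t_bounded (\<lambda>z. peval_real (\<lambda>c. lift c z) e (\<lambda>i. Y i z))"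
  using assms(1)
  by (induction e) (auto intro: t_bounded_add t_bounded_mult t_bounded_lift assms(2))

lemma peval_R_resid:
  assumes "pconsts e \<subseteq> ocarrier RS" "\<And>i. y $ i = resid (Y i)" "\<And>i. t_bounded (Y i)"
  shows "peval RS e y = resid (\<lambda>z. peval_real (\<lambda>c. lift c z) e (\<lambda>i. Y i z))"
  using assms(1)
proof (induction e)
  case (PConst c)
  then show ?case using resid_lift by simp
next
  case (PVar i)
  then show ?case using assms(2) by simp
next
  case (PAdd p q)
  moreover have "t_bounded (\<lambda>z. peval_real (\<lambda>c. lift c z) p (\<lambda>i. Y i z))"
    and "t_bounded (\<lambda>z. peval_real (\<lambda>c. lift c z) q (\<lambda>i. Y i z))"
    using PAdd.prems by (auto intro: t_bounded_peval_real_lift assms(3))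
  ultimately show ?case by (simp add: R_add_resid)
next
  case (PMult p q)
  moreover have "t_bounded (\<lambda>z. peval_real (\<lambda>c. lift c z) p (\<lambda>i. Y i z))"
    and "t_bounded (\<lambda>z. peval_real (\<lambda>c. lift c z) q (\<lambda>i. Y i z))"
    using PMult.prems by (auto intro: t_bounded_peval_real_lift assms(3))
  ultimately show ?case by (simp add: R_mult_resid)
qed

lemma t_bounded_abs_bound:
  "pconsts e \<subseteq> ocarrier RS \<Longrightarrow> t_bounded M \<Longrightarrow>
    t_bounded (\<lambda>z. abs_bound (\<lambda>c. lift c z) e (M z))"
  by (induction e) (auto intro: t_bounded_add t_bounded_mult t_bounded_abs t_bounded_lift)

lemma t_bounded_lipschitz_bound:
  "pconsts e \<subseteq> ocarrier RS \<Longrightarrow> t_bounded M \<Longrightarrow>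
    t_bounded (\<lambda>z. lipschitz_bound (\<lambda>c. lift c z) e (M z))"
  by (induction e) (auto intro!: t_bounded_add t_bounded_mult t_bounded_abs_bound t_bounded_const)

definition lift_eval :: "(rfield, 'n) pexpr \<Rightarrow> rfield ^ 'n \<Rightarrow> complex \<Rightarrow> real" where
  "lift_eval e y z = peval_real (\<lambda>c. lift c z) e (\<lambda>i. lift (y $ i) z)"

lemma t_bounded_lift_eval:
  "pconsts e \<subseteq> ocarrier RS \<Longrightarrow> y \<in> ospace RS \<Longrightarrow> t_bounded (lift_eval e y)"
  unfolding lift_eval_def by (rule t_bounded_peval_real_lift) (auto intro: t_bounded_lift ospace_nth)

lemma peval_R_eq_resid:
  "pconsts e \<subseteq> ocarrier RS \<Longrightarrow> y \<in> ospace RS \<Longrightarrow> peval RS e y = resid (lift_eval e y)"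
  unfolding lift_eval_def
  by (rule peval_R_resid) (auto simp: resid_lift t_bounded_lift ospace_nth)

lemma peval_R_eq_zero_iff:
  assumes "pconsts e \<subseteq> ocarrier RS" "y \<in> ospace RS"
  shows "peval RS e y = ozero RS \<longleftrightarrow> t_negligible (lift_eval e y)"
  using resid_eq_iff[OF t_bounded_lift_eval[OF assms] t_bounded_const, of 0]
  by (simp add: peval_R_eq_resid[OF assms] R_ops)

end

section \<open>Zero sets of non-vanishing polynomials over \<open>R\<close> have empty interior\<close>

context infinitesimal_ultrafilter
begin

lemma lift_eval_upd_eq_poly:
  "lift_eval e (\<chi> j. if j = i then c else y $ j) z
     = poly (poly_in_var (\<lambda>c. lift c z) e i (\<lambda>j. lift (y $ j) z)) (lift c z)"
  unfolding lift_eval_def poly_poly_in_var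
  by (rule arg_cong[where f="peval_real _ e"]) (auto simp: fun_eq_iff)

lemma lift_eval_eq_poly:
  "lift_eval e y z = poly (poly_in_var (\<lambda>c. lift c z) e i (\<lambda>j. lift (y $ j) z)) (lift (y $ i) z)"
proof -
  have "(\<chi> j. if j = i then y $ i else y $ j) = y" by (simp add: vec_eq_iff)
  then show ?thesis using lift_eval_upd_eq_poly[of e i "y $ i" y z] by simp
qed

text \<open>
  The \<open>D + 1\<close> nodes are spaced by more than a fixed power of \<open>t\<close>, so the Lagrange bound
  transfers \<open>t\<close>-negligibility from the values at the nodes to the value at \<open>y\<close>.
\<close>
lemma peval_R_zero_if_zero_on_segment:
  fixes e :: "(rfield, 'n::finite) pexpr"
  assumes e: "pconsts e \<subseteq> ocarrier RS" and y: "y \<in> ospace RS"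
    and a: "a \<in> ocarrier RS" and b: "b \<in> ocarrier RS" and ab: "oless RS a b"
    and zero: "\<And>c. c \<in> ocarrier RS \<Longrightarrow> oless RS a c \<Longrightarrow> oless RS c b \<Longrightarrow>
       peval RS e (\<chi> j. if j = i then c else y $ j) = ozero RS"
  shows "peval RS e y = ozero RS"
proof -
  define A B where "A = lift a" and "B = lift b"
  obtain N where N: "\<forall>\<^sub>F z in UF. cmod z ^ N < B z - A z"
    using R_less_iff[OF a b] ab unfolding t_positive_def A_def B_def by blast
  define D where "D = pdegree e"
  define t where "t k = real (Suc k) / (real D + 2)" for k
  define S where "S k z = A z + t k * (B z - A z)" for k z
  define s where "s k = resid (S k)" for k
  have s_between: "s k \<in> ocarrier RS \<and> oless RS a (s k) \<and> oless RS (s k) b" if "k \<le> D" for k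
  proof -
    have "0 < t k" "t k < 1" using that unfolding t_def by (auto simp: field_simps)
    from R_between[OF a b ab this] show ?thesis unfolding s_def S_def A_def B_def .
  qed
  have zero_at_nodes: "t_negligible (lift_eval e (\<chi> j. if j = i then s k else y $ j))"
    if "k \<le> D" for k
    using zero[of "s k"] s_between[OF that] peval_R_eq_zero_iff[OF e ospace_upd[OF y]] by blast
  have S_bounded: "t_bounded (S k)" for k
    unfolding S_def A_def B_def using a b
    by (intro t_bounded_add t_bounded_mult t_bounded_const t_bounded_diff t_bounded_lift)
  have nodes_close: "\<forall>\<^sub>F z in UF. \<forall>k\<in>{..D}. \<bar>lift (s k) z - S k z\<bar> \<le> cmod z ^ (N + 3)"
    unfolding s_def using t_negligibleD[OF lift_resid[OF S_bounded]]
    by (intro eventually_ball_finite) auto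
  define F where "F z = (\<Sum>k\<le>D. \<bar>lift_eval e (\<chi> j. if j = i then s k else y $ j) z\<bar>)
      * (2 * (\<bar>lift (y $ i) z\<bar> + (\<Sum>k\<le>D. \<bar>lift (s k) z\<bar>)) / cmod z ^ (N + 2)) ^ D" for z
  have "t_negligible F"
    unfolding F_def
  proof (rule t_negligible_mult)
    show "t_negligible (\<lambda>z. \<Sum>k\<le>D. \<bar>lift_eval e (\<chi> j. if j = i then s k else y $ j) z\<bar>)"
      by (intro t_negligible_sum t_negligible_abs zero_at_nodes) auto
    show "t_bounded (\<lambda>z. (2 * (\<bar>lift (y $ i) z\<bar> + (\<Sum>k\<le>D. \<bar>lift (s k) z\<bar>)) / cmod z ^ (N + 2)) ^ D)"
      unfolding divide_inverse using y s_between
      by (intro t_bounded_power t_bounded_mult t_bounded_const t_bounded_add t_bounded_abs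
          t_bounded_sum t_bounded_lift t_bounded_inverse_power_norm ospace_nth) auto
  qed
  moreover have "\<forall>\<^sub>F z in UF. \<bar>lift_eval e y z\<bar> \<le> \<bar>F z\<bar>"
    using eventually_UF_small[of "1 / (real D + 4)", simplified] N nodes_close
  proof eventually_elim
    case (elim z)
    let ?q = "poly_in_var (\<lambda>c. lift c z) e i (\<lambda>j. lift (y $ j) z)"
    have "\<bar>poly ?q (lift (y $ i) z)\<bar> \<le> (\<Sum>k\<le>D. \<bar>poly ?q (lift (s k) z)\<bar>)
        * (2 * (\<bar>lift (y $ i) z\<bar> + (\<Sum>k\<le>D. \<bar>lift (s k) z\<bar>)) / cmod z ^ (N + 2)) ^ D"
    proof (rule abs_poly_le_at_perturbed_nodes)
      show "degree ?q \<le> D" unfolding D_def by (rule degree_poly_in_var)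
    qed (use elim in \<open>auto simp: S_def t_def field_simps\<close>)
    then show ?case
      unfolding F_def lift_eval_eq_poly[of e y z i] lift_eval_upd_eq_poly by simp
  qed
  ultimately have "t_negligible (lift_eval e y)" by (rule t_negligible_le)
  then show ?thesis using peval_R_eq_zero_iff[OF e y] by simp
qed

lemma peval_R_zero_if_zero_on_box:
  fixes e :: "(rfield, 'n::finite) pexpr"
  assumes e: "pconsts e \<subseteq> ocarrier RS" and box: "nondegenerate_box RS \<alpha> \<beta>"
    and zero: "\<And>y. y \<in> ospace RS \<Longrightarrow> in_box RS \<alpha> \<beta> y \<Longrightarrow> peval RS e y = ozero RS"
    and y: "y \<in> ospace RS"
  shows "peval RS e y = ozero RS"
proof -
  have "\<forall>y\<in>ospace RS. (\<forall>i. i \<notin> J \<longrightarrow> oless RS (\<alpha> i) (y $ i) \<and> oless RS (y $ i) (\<beta> i))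
      \<longrightarrow> peval RS e y = ozero RS" if "finite J" for J
    using that
  proof (induction J rule: finite_induct)
    case empty
    then show ?case using zero by (simp add: in_box_def)
  next
    case (insert i J)
    show ?case
    proof (intro ballI impI)
      fix y assume y: "y \<in> ospace RS"
        and H: "\<forall>j. j \<notin> insert i J \<longrightarrow> oless RS (\<alpha> j) (y $ j) \<and> oless RS (y $ j) (\<beta> j)"
      from box have "\<alpha> i \<in> ocarrier RS" "\<beta> i \<in> ocarrier RS" "oless RS (\<alpha> i) (\<beta> i)"
        by (simp_all add: nondegenerate_box_def)
      from e y this show "peval RS e y = ozero RS"
      proof (rule peval_R_zero_if_zero_on_segment)
        fix c assume c: "c \<in> ocarrier RS" "oless RS (\<alpha> i) c" "oless RS c (\<beta> i)"
        show "peval RS e (\<chi> j. if j = i then c else y $ j) = ozero RS"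
          using insert.IH ospace_upd[OF y c(1), of i] H c by auto
      qed
    qed
  qed
  from this[of UNIV] y show ?thesis by simp
qed

lemma t_positive_stable:
  assumes "t_positive f"
  shows "\<forall>\<^sub>F m in sequentially. \<forall>g. (\<forall>\<^sub>F z in UF. \<bar>g z - f z\<bar> < 2 * cmod z ^ m) \<longrightarrow> t_positive g"
proof -
  obtain N where N: "\<forall>\<^sub>F z in UF. cmod z ^ N < f z" using assms unfolding t_positive_def by blast
  have stable: "t_positive g" if "Suc N < m" and g: "\<forall>\<^sub>F z in UF. \<bar>g z - f z\<bar> < 2 * cmod z ^ m" for m g
  proof -
    from eventually_UF_quarter N g have "\<forall>\<^sub>F z in UF. cmod z ^ Suc N < g z"
    proof eventually_elim
      case (elim z)
      have "2 * cmod z ^ m \<le> cmod z ^ Suc N" "2 * cmod z ^ Suc N \<le> cmod z ^ N"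
        using double_power_le[of "cmod z" "Suc N" m] double_power_Suc_le[of "cmod z" N] elim \<open>Suc N < m\<close>
        by auto
      with elim show ?case unfolding abs_less_iff by linarith
    qed
    then show ?thesis unfolding t_positive_def by blast
  qed
  show ?thesis unfolding eventually_sequentially by (intro exI[of _ "N + 2"] allI impI stable) auto
qed

lemma not_t_negligible_stable:
  assumes "\<not> t_negligible f"
  shows "\<exists>N. \<forall>g. (\<forall>\<^sub>F z in UF. \<bar>g z - f z\<bar> \<le> cmod z ^ N) \<longrightarrow> \<not> t_negligible g"
proof -
  obtain N where N: "\<forall>\<^sub>F z in UF. cmod z ^ N < \<bar>f z\<bar>" using assms not_t_negligible_iff by blast
  have "\<not> t_negligible g" if "\<forall>\<^sub>F z in UF. \<bar>g z - f z\<bar> \<le> cmod z ^ Suc N" for g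
  proof -
    from eventually_UF_quarter N that have "\<forall>\<^sub>F z in UF. cmod z ^ Suc N < \<bar>g z\<bar>"
    proof eventually_elim
      case (elim z)
      have "2 * cmod z ^ Suc N \<le> cmod z ^ N" using double_power_Suc_le[of "cmod z" N] elim by simp
      moreover have "\<bar>f z\<bar> - \<bar>g z\<bar> \<le> \<bar>g z - f z\<bar>"
        using abs_triangle_ineq2[of "f z" "g z"] by (simp add: abs_minus_commute)
      ultimately show ?case using elim by linarith
    qed
    then show ?thesis unfolding not_t_negligible_iff by blast
  qed
  then show ?thesis by blast
qed

definition close_in_R :: "nat \<Rightarrow> rfield \<Rightarrow> rfield \<Rightarrow> bool" where
  "close_in_R m x x\<^sub>0 \<longleftrightarrow> (\<forall>\<^sub>F z in UF. \<bar>lift x z - lift x\<^sub>0 z\<bar> < 2 * cmod z ^ m)"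

definition close_points :: "nat \<Rightarrow> rfield ^ 'n \<Rightarrow> rfield ^ 'n \<Rightarrow> bool" where
  "close_points m y y\<^sub>0 \<longleftrightarrow> (\<forall>i. close_in_R m (y $ i) (y\<^sub>0 $ i))"

lemma box_around_point:
  fixes m :: nat
  assumes y\<^sub>0: "y\<^sub>0 \<in> ospace RS"
  defines "\<alpha> \<equiv> \<lambda>i. resid (\<lambda>z. lift (y\<^sub>0 $ i) z - cmod z ^ m)"
    and "\<beta> \<equiv> \<lambda>i. resid (\<lambda>z. lift (y\<^sub>0 $ i) z + cmod z ^ m)"
  shows "nondegenerate_box RS \<alpha> \<beta>"
    and "y \<in> ospace RS \<Longrightarrow> in_box RS \<alpha> \<beta> y \<Longrightarrow> close_points m y y\<^sub>0"
proof -
  have lo: "t_bounded (\<lambda>z. lift (y\<^sub>0 $ i) z - cmod z ^ m)"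
    and hi: "t_bounded (\<lambda>z. lift (y\<^sub>0 $ i) z + cmod z ^ m)" for i
    using t_bounded_lift[OF ospace_nth[OF y\<^sub>0]] t_bounded_power_norm
    by (auto intro: t_bounded_add t_bounded_diff)
  have "t_positive (\<lambda>z. 2 * cmod z ^ m)" by (rule t_positive_cmult[OF _ t_positive_power_norm]) simp
  then show box: "nondegenerate_box RS \<alpha> \<beta>"
    unfolding nondegenerate_box_def \<alpha>_def \<beta>_def
    using R_less_resid_iff[OF lo hi] resid_in_carrier[OF lo] resid_in_carrier[OF hi] by simp
  show "close_points m y y\<^sub>0" if y: "y \<in> ospace RS" and "in_box RS \<alpha> \<beta> y"
    unfolding close_points_def close_in_R_def
  proof
    fix i
    have "t_positive (\<lambda>z. lift (y $ i) z - lift (\<alpha> i) z)" "t_positive (\<lambda>z. lift (\<beta> i) z - lift (y $ i) z)"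
      using \<open>in_box RS \<alpha> \<beta> y\<close> box y R_less_iff ospace_nth
      unfolding in_box_def nondegenerate_box_def by blast+
    from this[THEN t_positive_imp_eventually_pos]
      t_negligibleD[OF lift_resid[OF lo], of i m] t_negligibleD[OF lift_resid[OF hi], of i m]
    show "\<forall>\<^sub>F z in UF. \<bar>lift (y $ i) z - lift (y\<^sub>0 $ i) z\<bar> < 2 * cmod z ^ m"
      unfolding \<alpha>_def \<beta>_def by eventually_elim (simp add: abs_le_iff abs_less_iff)
  qed
qed

lemma eventually_close_R_less:
  assumes w: "w \<in> ocarrier RS" and x\<^sub>0: "x\<^sub>0 \<in> ocarrier RS"
  shows "oless RS w x\<^sub>0 \<Longrightarrow>
      \<forall>\<^sub>F m in sequentially. \<forall>x\<in>ocarrier RS. close_in_R m x x\<^sub>0 \<longrightarrow> oless RS w x"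
    and "oless RS x\<^sub>0 w \<Longrightarrow>
      \<forall>\<^sub>F m in sequentially. \<forall>x\<in>ocarrier RS. close_in_R m x x\<^sub>0 \<longrightarrow> oless RS x w"
proof -
  assume "oless RS w x\<^sub>0"
  then have "t_positive (\<lambda>z. lift x\<^sub>0 z - lift w z)" using R_less_iff w x\<^sub>0 by blast
  from t_positive_stable[OF this]
  show "\<forall>\<^sub>F m in sequentially. \<forall>x\<in>ocarrier RS. close_in_R m x x\<^sub>0 \<longrightarrow> oless RS w x"
    by (rule eventually_mono) (auto simp: close_in_R_def R_less_iff[OF w])
next
  assume "oless RS x\<^sub>0 w"
  then have "t_positive (\<lambda>z. lift w z - lift x\<^sub>0 z)" using R_less_iff w x\<^sub>0 by blast
  from t_positive_stable[OF this]
  show "\<forall>\<^sub>F m in sequentially. \<forall>x\<in>ocarrier RS. close_in_R m x x\<^sub>0 \<longrightarrow> oless RS x w"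
    by (rule eventually_mono) (auto simp: close_in_R_def R_less_iff[OF _ w] abs_minus_commute)
qed

lemma eventually_close_points_in_box:
  assumes y\<^sub>0: "y\<^sub>0 \<in> ospace RS" and box: "nondegenerate_box RS \<alpha> \<beta>" "in_box RS \<alpha> \<beta> y\<^sub>0"
  shows "\<forall>\<^sub>F m in sequentially. \<forall>y\<in>ospace RS. close_points m y y\<^sub>0 \<longrightarrow> in_box RS \<alpha> \<beta> y"
proof -
  have "\<forall>\<^sub>F m in sequentially. \<forall>y\<in>ospace RS. close_points m y y\<^sub>0 \<longrightarrow>
      oless RS (\<alpha> i) (y $ i) \<and> oless RS (y $ i) (\<beta> i)" for i
  proof -
    have carrier: "\<alpha> i \<in> ocarrier RS" "\<beta> i \<in> ocarrier RS" "y\<^sub>0 $ i \<in> ocarrier RS"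
      using box(1) y\<^sub>0 by (auto simp: nondegenerate_box_def ospace_nth)
    from box(2) have "oless RS (\<alpha> i) (y\<^sub>0 $ i)" "oless RS (y\<^sub>0 $ i) (\<beta> i)"
      unfolding in_box_def by simp_all
    from eventually_conj[OF eventually_close_R_less(1)[OF carrier(1,3) this(1)]
        eventually_close_R_less(2)[OF carrier(2,3) this(2)]]
    show ?thesis
    proof (rule eventually_mono, intro ballI impI)
      fix m y
      assume "(\<forall>x\<in>ocarrier RS. close_in_R m x (y\<^sub>0 $ i) \<longrightarrow> oless RS (\<alpha> i) x)
          \<and> (\<forall>x\<in>ocarrier RS. close_in_R m x (y\<^sub>0 $ i) \<longrightarrow> oless RS x (\<beta> i))"
        and "y \<in> ospace RS" "close_points m y y\<^sub>0"
      then show "oless RS (\<alpha> i) (y $ i) \<and> oless RS (y $ i) (\<beta> i)"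
        unfolding close_points_def using ospace_nth by blast
    qed
  qed
  then show ?thesis unfolding in_box_def by (rule eventually_all_finite[THEN eventually_mono]) auto
qed

lemma eventually_close_points_nonzero:
  fixes e :: "(rfield, 'n::finite) pexpr"
  assumes e: "pconsts e \<subseteq> ocarrier RS" and y\<^sub>0: "y\<^sub>0 \<in> ospace RS" and nz: "peval RS e y\<^sub>0 \<noteq> ozero RS"
  shows "\<forall>\<^sub>F m in sequentially. \<forall>y\<in>ospace RS. close_points m y y\<^sub>0 \<longrightarrow> peval RS e y \<noteq> ozero RS"
proof -
  have "\<not> t_negligible (lift_eval e y\<^sub>0)" using nz peval_R_eq_zero_iff[OF e y\<^sub>0] by simp
  then obtain N where N: "\<And>g. (\<forall>\<^sub>F z in UF. \<bar>g z - lift_eval e y\<^sub>0 z\<bar> \<le> cmod z ^ N) \<Longrightarrow> \<not> t_negligible g"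
    using not_t_negligible_stable by blast
  define M where "M z = (\<Sum>i\<in>UNIV. \<bar>lift (y\<^sub>0 $ i) z\<bar>) + 1" for z
  define L where "L z = lipschitz_bound (\<lambda>c. lift c z) e (M z)" for z
  have "t_bounded L"
    unfolding L_def M_def using y\<^sub>0
    by (intro t_bounded_lipschitz_bound[OF e] t_bounded_add t_bounded_sum t_bounded_abs
        t_bounded_const t_bounded_lift ospace_nth) auto
  then obtain K where K: "\<forall>\<^sub>F z in UF. \<bar>L z\<bar> \<le> inverse (cmod z ^ K)" unfolding t_bounded_def by blast
  have nonzero: "peval RS e y \<noteq> ozero RS" if m: "N + K < m" and y: "y \<in> ospace RS" "close_points m y y\<^sub>0" for m y
  proof -
    have "\<forall>\<^sub>F z in UF. \<forall>i. \<bar>lift (y $ i) z - lift (y\<^sub>0 $ i) z\<bar> < 2 * cmod z ^ m"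
      using y(2) unfolding close_points_def close_in_R_def by (intro eventually_all_finite) blast
    with eventually_UF_quarter K
    have "\<forall>\<^sub>F z in UF. \<bar>lift_eval e y\<^sub>0 z - lift_eval e y z\<bar> \<le> cmod z ^ N"
    proof eventually_elim
      case (elim z)
      let ?r = "cmod z"
      have "2 * ?r ^ m \<le> 1" using double_power_le[of ?r 0 m] elim m by simp
      have "\<bar>lift_eval e y\<^sub>0 z - lift_eval e y z\<bar> \<le> L z * (2 * ?r ^ m)"
        unfolding lift_eval_def L_def M_def
        by (rule peval_real_close) (use elim \<open>2 * ?r ^ m \<le> 1\<close> in \<open>auto intro: less_imp_le\<close>)
      also have "\<dots> \<le> inverse (?r ^ K) * (2 * ?r ^ m)"
        using elim by (intro mult_right_mono) auto
      also have "\<dots> = 2 * ?r ^ (m - K)"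
        using elim m by (simp add: power_diff field_simps)
      also have "\<dots> \<le> ?r ^ N" using double_power_le[of ?r N "m - K"] elim m by simp
      finally show ?case .
    qed
    then have "\<not> t_negligible (lift_eval e y)" by (intro N) (simp add: abs_minus_commute)
    then show ?thesis using peval_R_eq_zero_iff[OF e y(1)] by simp
  qed
  show ?thesis
    unfolding eventually_sequentially by (intro exI[of _ "Suc (N + K)"] allI impI ballI nonzero) auto
qed

lemma nonzero_near_point:
  fixes e :: "(rfield, 'n::finite) pexpr"
  assumes e: "pconsts e \<subseteq> ocarrier RS" and y\<^sub>0: "y\<^sub>0 \<in> ospace RS" and nz: "peval RS e y\<^sub>0 \<noteq> ozero RS"
    and box: "nondegenerate_box RS \<alpha> \<beta>" "in_box RS \<alpha> \<beta> y\<^sub>0"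
  obtains \<alpha>' \<beta>' where "nondegenerate_box RS \<alpha>' \<beta>'"
    and "\<And>y. y \<in> ospace RS \<Longrightarrow> in_box RS \<alpha>' \<beta>' y \<Longrightarrow> peval RS e y \<noteq> ozero RS \<and> in_box RS \<alpha> \<beta> y"
proof -
  from eventually_conj[OF eventually_close_points_in_box[OF y\<^sub>0 box]
      eventually_close_points_nonzero[OF e y\<^sub>0 nz]]
  obtain m where "\<forall>y\<in>ospace RS. close_points m y y\<^sub>0 \<longrightarrow> in_box RS \<alpha> \<beta> y \<and> peval RS e y \<noteq> ozero RS"
    unfolding eventually_sequentially by blast
  with box_around_point[OF y\<^sub>0, where m = m] that show ?thesis by blast
qed

lemma box_avoids_zero_sets:
  fixes ps :: "(rfield, 'n::finite) pexpr list"
  assumes "\<forall>e\<in>set ps. pconsts e \<subseteq> ocarrier RS \<and> (\<exists>y\<in>ospace RS. peval RS e y \<noteq> ozero RS)"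
    and "nondegenerate_box RS \<alpha> \<beta>"
  shows "\<exists>v\<in>ospace RS. in_box RS \<alpha> \<beta> v \<and> (\<forall>e\<in>set ps. peval RS e v \<noteq> ozero RS)"
  using assms
proof (induction ps arbitrary: \<alpha> \<beta>)
  case Nil
  define v where "v = (\<chi> i. resid (\<lambda>z. lift (\<alpha> i) z + 1/2 * (lift (\<beta> i) z - lift (\<alpha> i) z)))"
  have "v $ i \<in> ocarrier RS \<and> oless RS (\<alpha> i) (v $ i) \<and> oless RS (v $ i) (\<beta> i)" for i
    unfolding v_def using R_between[of "\<alpha> i" "\<beta> i" "1/2"] Nil.prems(2)
    by (simp add: nondegenerate_box_def)
  then show ?case by (intro bexI[of _ v]) (auto simp: ospace_def in_box_def)
next
  case (Cons e ps)
  then have e: "pconsts e \<subseteq> ocarrier RS" by simp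
  have "\<not> (\<forall>y\<in>ospace RS. in_box RS \<alpha> \<beta> y \<longrightarrow> peval RS e y = ozero RS)"
    using peval_R_zero_if_zero_on_box[OF e Cons.prems(2)] Cons.prems(1) by auto
  then obtain y\<^sub>0 where y\<^sub>0: "y\<^sub>0 \<in> ospace RS" "in_box RS \<alpha> \<beta> y\<^sub>0" "peval RS e y\<^sub>0 \<noteq> ozero RS"
    by blast
  obtain \<alpha>' \<beta>' where box': "nondegenerate_box RS \<alpha>' \<beta>'"
    and sub: "\<And>y. y \<in> ospace RS \<Longrightarrow> in_box RS \<alpha>' \<beta>' y \<Longrightarrow> peval RS e y \<noteq> ozero RS \<and> in_box RS \<alpha> \<beta> y"
    using nonzero_near_point[OF e y\<^sub>0(1,3) Cons.prems(2) y\<^sub>0(2)] by blast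
  obtain v where v: "v \<in> ospace RS" "in_box RS \<alpha>' \<beta>' v" "\<forall>e\<in>set ps. peval RS e v \<noteq> ozero RS"
    using Cons.IH[OF _ box'] Cons.prems(1) by auto
  with sub[OF v(1,2)] show ?case by auto
qed

lemma dim_le_if_covered_by_zero_sets:
  fixes X :: "(rfield ^ 'n::finite) set"
  assumes "\<forall>e\<in>set ps. pconsts e \<subseteq> ocarrier RS \<and> (\<exists>y\<in>ospace RS. peval RS e y \<noteq> ozero RS)"
    and "\<And>y. y \<in> X \<Longrightarrow> y \<in> ospace RS \<Longrightarrow> \<exists>e\<in>set ps. peval RS e y = ozero RS"
  shows "dim_le RS X (CARD('n) - 1)"
  unfolding dim_le_def
proof (intro allI impI notI)
  fix d \<sigma> assume "CARD('n) - 1 < d \<and> inj_on \<sigma> {..<d}" "proj_has_interior RS X d \<sigma>"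
  then obtain \<alpha> \<beta> where box: "nondegenerate_box RS \<alpha> \<beta>"
    and inside: "\<forall>y\<in>ospace RS. in_box RS \<alpha> \<beta> y \<longrightarrow> y \<in> X"
    using proj_has_interior_full_imp_box by blast
  obtain v where "v \<in> ospace RS" "in_box RS \<alpha> \<beta> v" "\<forall>e\<in>set ps. peval RS e v \<noteq> ozero RS"
    using box_avoids_zero_sets[OF assms(1) box] by blast
  with inside assms(2) show False by blast
qed

end

section \<open>Closed semi-algebraic sets over \<open>*R\<close>\<close>

context infinitesimal_ultrafilter
begin

definition nonpos_set :: "(hstar, 'n::finite) pexpr \<Rightarrow> (hstar ^ 'n) set" where
  "nonpos_set Q = ospace HS - {x \<in> ospace HS. oless HS (ozero HS) (peval HS Q x)}"

lemma nonpos_set_subset: "nonpos_set Q \<subseteq> ospace HS"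
  unfolding nonpos_set_def by blast

lemma semialg_nonpos_set: "pconsts Q \<subseteq> ocarrier HS \<Longrightarrow> nonpos_set Q \<in> semialg HS"
  unfolding nonpos_set_def by (intro semialg.scompl semialg.sbasic peval_in_polyfun)

lemma mem_nonpos_set_iff:
  "pconsts Q \<subseteq> ocarrier HS \<Longrightarrow> x \<in> ospace HS \<Longrightarrow>
    x \<in> nonpos_set Q \<longleftrightarrow> \<not> (\<forall>\<^sub>F z in UF. 0 < rep_eval Q x z)"
  unfolding nonpos_set_def using peval_H[of Q x] H_less_hcls_iff by (simp add: H_ops)

lemma nonpos_set_const:
  "nonpos_set (PConst (ozero HS)) = ospace HS" "nonpos_set (PConst (oone HS)) = {}"
proof -
  have zero: "\<not> (\<forall>\<^sub>F z in UF. 0 < hrep (ozero HS) z)"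
  proof
    assume "\<forall>\<^sub>F z in UF. 0 < hrep (ozero HS) z"
    with eventually_hrep_hcls[of "\<lambda>z. 0"] have "\<forall>\<^sub>F z in UF. False"
      unfolding H_ops by eventually_elim simp
    with UF_neq_bot show False by (simp add: eventually_False)
  qed
  have one: "\<forall>\<^sub>F z in UF. 0 < hrep (oone HS) z"
    using eventually_hrep_hcls[of "\<lambda>z. 1"] unfolding H_ops by (rule eventually_mono) simp
  have "ozero HS \<in> ocarrier HS" "oone HS \<in> ocarrier HS"
    unfolding H_ops H_carrier by (rule hcls_in_quotient)+
  then show "nonpos_set (PConst (ozero HS)) = ospace HS" "nonpos_set (PConst (oone HS)) = {}"
    using mem_nonpos_set_iff[of "PConst (ozero HS)"] mem_nonpos_set_iff[of "PConst (oone HS)"]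
      zero one nonpos_set_subset
    by (auto simp: rep_eval_def)
qed

text \<open>
  Around a point where the representative of \<open>Q\<close> is positive, a box of \<open>U\<close>-varying radius
  \<open>\<delta>\<close> keeps it positive, by the Lipschitz bound for \<open>Q\<close>.
\<close>
lemma oclosed_nonpos_set:
  assumes Q: "pconsts Q \<subseteq> ocarrier HS"
  shows "oclosed HS (nonpos_set Q)"
  unfolding oclosed_def
proof (intro conjI ballI)
  show "nonpos_set Q \<subseteq> ospace HS" by (rule nonpos_set_subset)
  fix x assume "x \<in> ospace HS - nonpos_set Q"
  then have x: "x \<in> ospace HS" and pos: "\<forall>\<^sub>F z in UF. 0 < rep_eval Q x z"
    using mem_nonpos_set_iff[OF Q] by auto
  define M where "M z = (\<Sum>i\<in>UNIV. \<bar>hrep (x $ i) z\<bar>) + 1" for z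
  define L where "L z = lipschitz_bound (\<lambda>c. hrep c z) Q (M z)" for z
  define \<delta> where "\<delta> z = min (1/2) (rep_eval Q x z / (L z + 1))" for z
  have L: "0 \<le> L z" for z
    unfolding L_def M_def by (intro lipschitz_bound_nonneg) (simp add: sum_nonneg add_nonneg_nonneg)
  define a b where "a = (\<chi> i. hcls U (\<lambda>z. hrep (x $ i) z - \<delta> z))"
    and "b = (\<chi> i. hcls U (\<lambda>z. hrep (x $ i) z + \<delta> z))"
  have ab: "a \<in> ospace HS" "b \<in> ospace HS"
    unfolding a_def b_def ospace_def H_carrier by (auto simp: hcls_in_quotient)
  have "\<forall>\<^sub>F z in UF. 0 < \<delta> z"
    using pos by (rule eventually_mono) (use L in \<open>simp add: \<delta>_def add_nonneg_pos\<close>)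
  then have x_in: "\<forall>i. oless HS (a $ i) (x $ i) \<and> oless HS (x $ i) (b $ i)"
    by (auto simp: a_def b_def H_less_nth_iff[OF x] elim: eventually_mono)
  have "y \<notin> nonpos_set Q"
    if y: "y \<in> ospace HS" and y_in: "\<forall>i. oless HS (a $ i) (y $ i) \<and> oless HS (y $ i) (b $ i)" for y
  proof -
    have "\<forall>\<^sub>F z in UF. \<bar>hrep (y $ i) z - hrep (x $ i) z\<bar> < \<delta> z" for i
    proof -
      have "\<forall>\<^sub>F z in UF. hrep (x $ i) z - \<delta> z < hrep (y $ i) z"
        and "\<forall>\<^sub>F z in UF. hrep (y $ i) z < hrep (x $ i) z + \<delta> z"
        using y_in by (auto simp: a_def b_def H_less_nth_iff[OF y])
      then show ?thesis by eventually_elim (simp add: abs_less_iff)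
    qed
    then have close: "\<forall>\<^sub>F z in UF. \<forall>i. \<bar>hrep (y $ i) z - hrep (x $ i) z\<bar> < \<delta> z"
      by (rule eventually_all_finite)
    from close pos have "\<forall>\<^sub>F z in UF. 0 < rep_eval Q y z"
    proof eventually_elim
      case (elim z)
      have "\<delta> z \<le> 1/2" unfolding \<delta>_def by (rule min.cobounded1)
      have "\<bar>rep_eval Q x z - rep_eval Q y z\<bar> \<le> L z * \<delta> z"
        unfolding rep_eval_def L_def M_def
        by (rule peval_real_close) (use elim \<open>\<delta> z \<le> 1/2\<close> in \<open>auto intro: less_imp_le\<close>)
      also have "\<dots> \<le> L z * (rep_eval Q x z / (L z + 1))"
        unfolding \<delta>_def using L[of z] by (intro mult_left_mono) auto
      also have "\<dots> < rep_eval Q x z"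
        using L[of z] elim by (simp add: field_simps)
      finally show ?case by linarith
    qed
    then show ?thesis using mem_nonpos_set_iff[OF Q y] by simp
  qed
  then show "\<exists>a b. a \<in> ospace HS \<and> b \<in> ospace HS \<and>
      (\<forall>i. oless HS (a $ i) (x $ i) \<and> oless HS (x $ i) (b $ i)) \<and>
      (\<forall>y\<in>nonpos_set Q. \<not> (\<forall>i. oless HS (a $ i) (y $ i) \<and> oless HS (y $ i) (b $ i)))"
    using ab x_in nonpos_set_subset by blast
qed

lemma oclosed_Un_H:
  fixes A B :: "(hstar ^ 'n::finite) set"
  assumes A: "oclosed HS A" and B: "oclosed HS B"
  shows "oclosed HS (A \<union> B)"
  unfolding oclosed_def
proof (intro conjI ballI)
  show "A \<union> B \<subseteq> ospace HS" using A B unfolding oclosed_def by auto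
  fix x assume x: "x \<in> ospace HS - (A \<union> B)"
  obtain a b where ab: "a \<in> ospace HS" "b \<in> ospace HS"
    "\<forall>i. oless HS (a $ i) (x $ i) \<and> oless HS (x $ i) (b $ i)"
    "\<forall>y\<in>A. \<not> (\<forall>i. oless HS (a $ i) (y $ i) \<and> oless HS (y $ i) (b $ i))"
    using A x unfolding oclosed_def by blast
  obtain a' b' where ab': "a' \<in> ospace HS" "b' \<in> ospace HS"
    "\<forall>i. oless HS (a' $ i) (x $ i) \<and> oless HS (x $ i) (b' $ i)"
    "\<forall>y\<in>B. \<not> (\<forall>i. oless HS (a' $ i) (y $ i) \<and> oless HS (y $ i) (b' $ i))"
    using B x unfolding oclosed_def by blast
  define a\<^sub>2 b\<^sub>2 where "a\<^sub>2 = (\<chi> i. hcls U (\<lambda>z. max (hrep (a $ i) z) (hrep (a' $ i) z)))"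
    and "b\<^sub>2 = (\<chi> i. hcls U (\<lambda>z. min (hrep (b $ i) z) (hrep (b' $ i) z)))"
  have in_space: "a\<^sub>2 \<in> ospace HS" "b\<^sub>2 \<in> ospace HS"
    unfolding a\<^sub>2_def b\<^sub>2_def ospace_def H_carrier by (auto simp: hcls_in_quotient)
  have meet: "(\<forall>i. oless HS (a\<^sub>2 $ i) (y $ i) \<and> oless HS (y $ i) (b\<^sub>2 $ i)) \<longleftrightarrow>
      (\<forall>i. oless HS (a $ i) (y $ i) \<and> oless HS (y $ i) (b $ i)) \<and>
      (\<forall>i. oless HS (a' $ i) (y $ i) \<and> oless HS (y $ i) (b' $ i))"
    if "y \<in> ospace HS" for y
  proof -
    have "oless HS (a\<^sub>2 $ i) (y $ i) \<longleftrightarrow> oless HS (a $ i) (y $ i) \<and> oless HS (a' $ i) (y $ i)"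
      and "oless HS (y $ i) (b\<^sub>2 $ i) \<longleftrightarrow> oless HS (y $ i) (b $ i) \<and> oless HS (y $ i) (b' $ i)" for i
      unfolding a\<^sub>2_def b\<^sub>2_def vec_lambda_beta H_less_nth_iff[OF that]
      by (simp_all add: H_ops eventually_conj_iff)
    then show ?thesis by blast
  qed
  show "\<exists>a b. a \<in> ospace HS \<and> b \<in> ospace HS \<and>
      (\<forall>i. oless HS (a $ i) (x $ i) \<and> oless HS (x $ i) (b $ i)) \<and>
      (\<forall>y\<in>A \<union> B. \<not> (\<forall>i. oless HS (a $ i) (y $ i) \<and> oless HS (y $ i) (b $ i)))"
  proof (intro exI conjI ballI)
    show "\<forall>i. oless HS (a\<^sub>2 $ i) (x $ i) \<and> oless HS (x $ i) (b\<^sub>2 $ i)"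
      using meet[of x] x ab(3) ab'(3) by blast
    fix y assume y: "y \<in> A \<union> B"
    then have "y \<in> ospace HS" using A B unfolding oclosed_def by blast
    then show "\<not> (\<forall>i. oless HS (a\<^sub>2 $ i) (y $ i) \<and> oless HS (y $ i) (b\<^sub>2 $ i))"
      using meet ab(4) ab'(4) y by blast
  qed (rule in_space)+
qed

end

section \<open>Lifting a definably compact subset of \<open>R\<^sup>n\<close> to \<open>*R\<^sup>n\<close>\<close>

context infinitesimal_ultrafilter
begin

definition lift_pexpr :: "(rfield, 'n) pexpr \<Rightarrow> (hstar, 'n) pexpr" where
  "lift_pexpr e = map_pexpr rrep id e"

definition minus_one :: hstar where
  "minus_one = hcls U (\<lambda>z. - 1)"

definition vanishes :: "(rfield, 'n::finite) pexpr \<Rightarrow> bool" where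
  "vanishes e \<longleftrightarrow> (\<forall>y\<in>ospace RS. peval RS e y = ozero RS)"

text \<open>\<open>closed_lift f b\<close> lifts the set defined by \<open>f\<close> if \<open>b\<close>, and its complement otherwise.\<close>
primrec closed_lift :: "(rfield, 'n::finite) formula \<Rightarrow> bool \<Rightarrow> (hstar ^ 'n) set" where
  "closed_lift (FPos e) b =
     (if vanishes e then (if b then {} else ospace HS)
      else if b then nonpos_set (PMult (PConst minus_one) (lift_pexpr e))
      else nonpos_set (lift_pexpr e))"
| "closed_lift (FNot f) b = closed_lift f (\<not> b)"
| "closed_lift (FAnd f g) b =
     (if b then closed_lift f True \<inter> closed_lift g True else closed_lift f False \<union> closed_lift g False)"

lemma pconsts_lift_pexpr: "pconsts e \<subseteq> ocarrier RS \<Longrightarrow> pconsts (lift_pexpr e) \<subseteq> ocarrier HS"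
  unfolding lift_pexpr_def pexpr.set_map R_carrier
  using rrep_in_Ar Ar_subset_H_carrier by blast

lemma minus_one_in_carrier: "minus_one \<in> ocarrier HS"
  unfolding minus_one_def H_carrier by (rule hcls_in_quotient)

lemma rep_eval_lift_pexpr:
  "rep_eval (lift_pexpr e) x z = peval_real (\<lambda>c. lift c z) e (\<lambda>i. hrep (x $ i) z)"
  unfolding rep_eval_def lift_pexpr_def peval_real_map_pexpr by (simp add: o_def lift_def)

lemma closed_lift_props:
  assumes "formula_over RS f"
  shows "closed_lift f b \<in> semialg HS \<and> oclosed HS (closed_lift f b) \<and> closed_lift f b \<subseteq> ospace HS"
  using assms
proof (induction f arbitrary: b)
  case (FPos e)
  then have e: "pconsts (lift_pexpr e) \<subseteq> ocarrier HS"
    and neg: "pconsts (PMult (PConst minus_one) (lift_pexpr e)) \<subseteq> ocarrier HS"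
    using pconsts_lift_pexpr minus_one_in_carrier by (auto simp: formula_over_def)
  have "pconsts (PConst (ozero HS) :: (hstar, 'n) pexpr) \<subseteq> ocarrier HS"
    and "pconsts (PConst (oone HS) :: (hstar, 'n) pexpr) \<subseteq> ocarrier HS"
    unfolding H_ops H_carrier by (simp_all add: hcls_in_quotient)
  note in_carrier = e neg this
  have "ospace HS \<in> semialg HS" "oclosed HS (ospace HS)" "{} \<in> semialg HS" "oclosed HS {}"
    using semialg_nonpos_set[OF in_carrier(3)] oclosed_nonpos_set[OF in_carrier(3)]
      semialg_nonpos_set[OF in_carrier(4)] oclosed_nonpos_set[OF in_carrier(4)]
    unfolding nonpos_set_const by simp_all
  then show ?case
    using semialg_nonpos_set[OF in_carrier(1)] oclosed_nonpos_set[OF in_carrier(1)]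
      semialg_nonpos_set[OF in_carrier(2)] oclosed_nonpos_set[OF in_carrier(2)] nonpos_set_subset
    by auto
next
  case (FNot f)
  then show ?case by (simp add: formula_over_def)
next
  case (FAnd f g)
  then have "formula_over RS f" "formula_over RS g" by (auto simp: formula_over_def)
  with FAnd.IH show ?case
    by (auto intro!: semialg.sinter semialg_Un oclosed_Int oclosed_Un_H)
qed

lemma reduce_nth:
  assumes "\<And>i. x $ i \<in> Ar U"
  shows "reduce x $ i = resid (hrep (x $ i))" and "reduce x \<in> ospace RS"
  using assms by (auto simp: reduce_def ospace_def rcls_eq_resid intro: resid_in_carrier Ar_imp_t_bounded)

lemma peval_R_reduce:
  assumes e: "pconsts e \<subseteq> ocarrier RS" and x: "\<And>i. x $ i \<in> Ar U"
  shows "peval RS e (reduce x) = resid (rep_eval (lift_pexpr e) x)"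
  unfolding rep_eval_lift_pexpr
  by (rule peval_R_resid[OF e reduce_nth(1)[OF x]]) (rule Ar_imp_t_bounded[OF x])

lemma t_bounded_rep_eval_lift_pexpr:
  assumes e: "pconsts e \<subseteq> ocarrier RS" and x: "\<And>i. x $ i \<in> Ar U"
  shows "t_bounded (rep_eval (lift_pexpr e) x)"
  unfolding rep_eval_lift_pexpr
  by (rule t_bounded_peval_real_lift[OF e]) (rule Ar_imp_t_bounded[OF x])

text \<open>
  Off the zero set of \<open>e\<close>, the representative of the lifted polynomial is not negligible, so
  its sign is eventually constant and equal to the sign of \<open>e\<close> at the reduction.
\<close>
lemma mem_nonpos_set_lift_iff:
  assumes e: "pconsts e \<subseteq> ocarrier RS" and x: "x \<in> ospace HS" "\<And>i. x $ i \<in> Ar U"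
    and nz: "peval RS e (reduce x) \<noteq> ozero RS"
  shows "x \<in> nonpos_set (lift_pexpr e) \<longleftrightarrow> reduce x \<notin> formula_set RS (FPos e)"
    and "x \<in> nonpos_set (PMult (PConst minus_one) (lift_pexpr e)) \<longleftrightarrow>
      reduce x \<in> formula_set RS (FPos e)"
proof -
  define W where "W = rep_eval (lift_pexpr e) x"
  have W: "t_bounded W" "peval RS e (reduce x) = resid W"
    unfolding W_def using t_bounded_rep_eval_lift_pexpr[OF e x(2)] peval_R_reduce[OF e x(2)] by auto
  then have "\<not> t_negligible W" using nz resid_eq_iff[OF W(1) t_bounded_const, of 0] by (simp add: R_ops)
  then have sign: "t_positive W \<longleftrightarrow> (\<forall>\<^sub>F z in UF. 0 < W z)" and nonzero: "\<forall>\<^sub>F z in UF. W z \<noteq> 0"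
    using t_positive_iff not_t_negligible_iff by (auto elim!: eventually_mono)
  have "reduce x \<in> formula_set RS (FPos e) \<longleftrightarrow> (\<forall>\<^sub>F z in UF. 0 < W z)"
    using reduce_nth(2)[OF x(2)] R_less_resid_iff[OF t_bounded_const W(1), of 0] sign
    by (simp add: W(2) R_ops)
  moreover have "x \<in> nonpos_set (lift_pexpr e) \<longleftrightarrow> \<not> (\<forall>\<^sub>F z in UF. 0 < W z)"
    using mem_nonpos_set_iff[OF pconsts_lift_pexpr[OF e] x(1)] unfolding W_def .
  moreover have "x \<in> nonpos_set (PMult (PConst minus_one) (lift_pexpr e))
      \<longleftrightarrow> \<not> (\<forall>\<^sub>F z in UF. W z < 0)"
  proof -
    have "pconsts (PMult (PConst minus_one) (lift_pexpr e)) \<subseteq> ocarrier HS"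
      using pconsts_lift_pexpr[OF e] minus_one_in_carrier by simp
    moreover have "(\<forall>\<^sub>F z in UF. 0 < hrep minus_one z * W z) \<longleftrightarrow> (\<forall>\<^sub>F z in UF. W z < 0)"
      by (rule eventually_subst, rule eventually_mono[OF eventually_hrep_hcls[of "\<lambda>z. -1"]])
        (simp add: minus_one_def zero_less_mult_iff)
    ultimately show ?thesis
      using mem_nonpos_set_iff[OF _ x(1)] unfolding W_def by (simp add: rep_eval_def)
  qed
  moreover have "(\<forall>\<^sub>F z in UF. W z < 0) \<longleftrightarrow> \<not> (\<forall>\<^sub>F z in UF. 0 < W z)"
  proof -
    have "(\<forall>\<^sub>F z in UF. W z < 0) \<longleftrightarrow> (\<forall>\<^sub>F z in UF. \<not> 0 < W z)"
      using nonzero by (intro eventually_subst) (auto elim: eventually_mono)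
    then show ?thesis by (simp add: eventually_UF_not_iff)
  qed
  ultimately show "x \<in> nonpos_set (lift_pexpr e) \<longleftrightarrow> reduce x \<notin> formula_set RS (FPos e)"
    and "x \<in> nonpos_set (PMult (PConst minus_one) (lift_pexpr e)) \<longleftrightarrow>
      reduce x \<in> formula_set RS (FPos e)"
    by simp_all
qed

lemma mem_closed_lift_iff:
  fixes f :: "(rfield, 'n::finite) formula"
  assumes f: "formula_over RS f" and x: "x \<in> ospace HS" "\<And>i. x $ i \<in> Ar U"
    and off_zeros: "\<And>e. e \<in> set (atoms f) \<Longrightarrow> \<not> vanishes e \<Longrightarrow> peval RS e (reduce x) \<noteq> ozero RS"
  shows "x \<in> closed_lift f b \<longleftrightarrow> (reduce x \<in> formula_set RS f) = b"
  using f off_zeros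
proof (induction f arbitrary: b)
  case (FPos e)
  then have e: "pconsts e \<subseteq> ocarrier RS" by (simp add: formula_over_def)
  show ?case
  proof (cases "vanishes e")
    case True
    then have "reduce x \<notin> formula_set RS (FPos e)"
      using reduce_nth(2)[OF x(2)] by (simp add: vanishes_def R_ops)
    with True x(1) show ?thesis by simp
  next
    case False
    with FPos.prems(2) mem_nonpos_set_lift_iff[OF e x] show ?thesis by (cases b) auto
  qed
next
  case (FNot f)
  then show ?case using reduce_nth(2)[OF x(2)] by (auto simp: formula_over_def)
next
  case (FAnd f g)
  then show ?case by (cases b) (auto simp: formula_over_def)
qed

definition closed_box :: "rfield \<Rightarrow> rfield \<Rightarrow> 'n::finite set \<Rightarrow> (hstar ^ 'n) set" where
  "closed_box lo hi I = {x \<in> ospace HS. \<forall>i\<in>I.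
     x \<in> nonpos_set (PAdd (PConst (rrep lo)) (PMult (PConst minus_one) (PVar i))) \<and>
     x \<in> nonpos_set (PAdd (PVar i) (PMult (PConst minus_one) (PConst (rrep hi))))}"

lemma closed_box_props:
  fixes I :: "'n::finite set"
  assumes lo: "lo \<in> ocarrier RS" and hi: "hi \<in> ocarrier RS" and "finite I"
  shows "closed_box lo hi I \<in> semialg HS \<and> oclosed HS (closed_box lo hi I)"
  using \<open>finite I\<close>
proof (induction I rule: finite_induct)
  case empty
  have zero: "pconsts (PConst (ozero HS) :: (hstar, 'n) pexpr) \<subseteq> ocarrier HS"
    unfolding H_ops H_carrier by (simp add: hcls_in_quotient)
  have "closed_box lo hi {} = nonpos_set (PConst (ozero HS) :: (hstar, 'n) pexpr)"
    unfolding closed_box_def nonpos_set_const(1) by simp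
  then show ?case using semialg_nonpos_set[OF zero] oclosed_nonpos_set[OF zero] by simp
next
  case (insert i I)
  let ?lower = "PAdd (PConst (rrep lo)) (PMult (PConst minus_one) (PVar i)) :: (hstar, 'n) pexpr"
  let ?upper = "PAdd (PVar i) (PMult (PConst minus_one) (PConst (rrep hi))) :: (hstar, 'n) pexpr"
  have lower_upper: "pconsts ?lower \<subseteq> ocarrier HS" "pconsts ?upper \<subseteq> ocarrier HS"
    using rrep_in_Ar Ar_subset_H_carrier minus_one_in_carrier lo hi unfolding R_carrier by auto
  have "closed_box lo hi (insert i I) = nonpos_set ?lower \<inter> nonpos_set ?upper \<inter> closed_box lo hi I"
    unfolding closed_box_def using nonpos_set_subset by auto
  then show ?case
    using insert.IH semialg_nonpos_set[OF lower_upper(1)] semialg_nonpos_set[OF lower_upper(2)]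
      oclosed_nonpos_set[OF lower_upper(1)] oclosed_nonpos_set[OF lower_upper(2)]
    by (auto intro!: semialg.sinter oclosed_Int)
qed

lemma mem_closed_box_iff:
  assumes lo: "lo \<in> ocarrier RS" and hi: "hi \<in> ocarrier RS" and x: "x \<in> ospace HS"
  shows "x \<in> closed_box lo hi UNIV \<longleftrightarrow>
    (\<forall>i. (\<forall>\<^sub>F z in UF. lift lo z \<le> hrep (x $ i) z) \<and> (\<forall>\<^sub>F z in UF. hrep (x $ i) z \<le> lift hi z))"
proof -
  have reps: "rrep lo \<in> ocarrier HS" "rrep hi \<in> ocarrier HS"
    using rrep_in_Ar Ar_subset_H_carrier lo hi unfolding R_carrier by auto
  have "(\<forall>\<^sub>F z in UF. 0 < hrep (rrep lo) z + hrep minus_one z * hrep (x $ i) z)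
      \<longleftrightarrow> (\<forall>\<^sub>F z in UF. \<not> lift lo z \<le> hrep (x $ i) z)"
    and "(\<forall>\<^sub>F z in UF. 0 < hrep (x $ i) z + hrep minus_one z * hrep (rrep hi) z)
      \<longleftrightarrow> (\<forall>\<^sub>F z in UF. \<not> hrep (x $ i) z \<le> lift hi z)" for i
    using eventually_hrep_hcls[of "\<lambda>z. -1", folded minus_one_def]
    by (auto intro!: eventually_subst elim!: eventually_mono simp: lift_def)
  then show ?thesis
    unfolding closed_box_def
    using x reps minus_one_in_carrier mem_nonpos_set_iff[OF _ x]
    by (simp add: rep_eval_def eventually_UF_not_iff)
qed

lemma closed_lift_in_box_compact:
  fixes f :: "(rfield, 'n::finite) formula"
  assumes f: "formula_over RS f" and lo: "lo \<in> ocarrier RS" and hi: "hi \<in> ocarrier RS"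
  defines "E \<equiv> closed_lift f True \<inter> closed_box lo hi UNIV"
  shows "def_compact HS E" and "E \<subseteq> {x. \<forall>i. x $ i \<in> Ar U}"
proof -
  have E: "E \<subseteq> ospace HS" unfolding E_def using closed_lift_props[OF f] by blast
  have lower: "\<forall>\<^sub>F z in UF. lift lo z \<le> hrep (x $ i) z"
    and upper: "\<forall>\<^sub>F z in UF. hrep (x $ i) z \<le> lift hi z" if "x \<in> E" for x i
    using mem_closed_box_iff[OF lo hi] that E unfolding E_def by blast+
  show "E \<subseteq> {x. \<forall>i. x $ i \<in> Ar U}"
  proof (clarify)
    fix x i assume x: "x \<in> E"
    from lower[OF x, of i] upper[OF x, of i]
    have le: "\<forall>\<^sub>F z in UF. \<bar>hrep (x $ i) z\<bar> \<le> \<bar>\<bar>lift lo z\<bar> + \<bar>lift hi z\<bar>\<bar>"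
      by eventually_elim auto
    have "t_bounded (\<lambda>z. \<bar>lift lo z\<bar> + \<bar>lift hi z\<bar>)"
      using lo hi by (intro t_bounded_add t_bounded_abs t_bounded_lift)
    then have "hcls U (hrep (x $ i)) \<in> Ar U"
      unfolding hcls_in_Ar_iff using le by (rule t_bounded_le)
    moreover have "hcls U (hrep (x $ i)) = x $ i"
      using ospace_nth[OF subsetD[OF E x], of i] by (intro hcls_hrep) (simp add: H_carrier)
    ultimately show "x $ i \<in> Ar U" by simp
  qed
  have "oless HS (hcls U (\<lambda>z. lift lo z - 1)) (y $ i) \<and> oless HS (y $ i) (hcls U (\<lambda>z. lift hi z + 1))"
    if "y \<in> E" for y i
  proof -
    have "\<forall>\<^sub>F z in UF. lift lo z - 1 < hrep (y $ i) z" "\<forall>\<^sub>F z in UF. hrep (y $ i) z < lift hi z + 1"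
      using lower[OF that, of i] upper[OF that, of i] by (auto elim: eventually_mono)
    then show ?thesis using H_less_nth_iff[OF subsetD[OF E that]] by simp
  qed
  moreover have "hcls U (\<lambda>z. lift lo z - 1) \<in> ocarrier HS" "hcls U (\<lambda>z. lift hi z + 1) \<in> ocarrier HS"
    by (simp_all add: H_carrier hcls_in_quotient)
  ultimately have "obounded HS E"
    unfolding obounded_def using E by blast
  moreover have "E \<in> semialg HS" "oclosed HS E"
    unfolding E_def using closed_lift_props[OF f, of True] closed_box_props[OF lo hi, of UNIV]
    by (auto intro!: semialg.sinter oclosed_Int)
  ultimately show "def_compact HS E" unfolding def_compact_def by blast
qed

lemma reduce_closed_lift_in_box_agrees:
  fixes f :: "(rfield, 'n::finite) formula"
  assumes f: "formula_over RS f" and lo: "lo \<in> ocarrier RS" and hi: "hi \<in> ocarrier RS"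
    and inside: "\<forall>y\<in>formula_set RS f. \<forall>i. oless RS lo (y $ i) \<and> oless RS (y $ i) hi"
    and y: "y \<in> ospace RS"
    and off_zeros: "\<And>e. e \<in> set (atoms f) \<Longrightarrow> \<not> vanishes e \<Longrightarrow> peval RS e y \<noteq> ozero RS"
  shows "y \<in> formula_set RS f \<longleftrightarrow> y \<in> reduce ` (closed_lift f True \<inter> closed_box lo hi UNIV)"
proof
  assume yK: "y \<in> formula_set RS f"
  define x where "x = (\<chi> i. rrep (y $ i))"
  have xA: "x $ i \<in> Ar U" for i
    unfolding x_def using rrep_in_Ar ospace_nth[OF y] R_carrier by simp
  have x: "x \<in> ospace HS" unfolding ospace_def using xA Ar_subset_H_carrier by blast
  have rx: "reduce x = y"
    unfolding reduce_def x_def using rrep_in_Ar ospace_nth[OF y] R_carrier by (simp add: vec_eq_iff)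
  have "x \<in> closed_lift f True"
    using mem_closed_lift_iff[OF f x xA] off_zeros yK rx by simp
  moreover have "x \<in> closed_box lo hi UNIV"
  proof -
    have "(\<forall>\<^sub>F z in UF. lift lo z \<le> hrep (x $ i) z) \<and> (\<forall>\<^sub>F z in UF. hrep (x $ i) z \<le> lift hi z)" for i
    proof -
      have "hrep (x $ i) = lift (y $ i)" unfolding x_def lift_def by simp
      moreover have "\<forall>\<^sub>F z in UF. lift lo z < lift (y $ i) z" "\<forall>\<^sub>F z in UF. lift (y $ i) z < lift hi z"
        using inside yK unfolding R_ops by blast+
      ultimately show ?thesis by (auto elim: eventually_mono)
    qed
    then show ?thesis using mem_closed_box_iff[OF lo hi x] by blast
  qed
  ultimately show "y \<in> reduce ` (closed_lift f True \<inter> closed_box lo hi UNIV)" using rx by blast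
next
  assume "y \<in> reduce ` (closed_lift f True \<inter> closed_box lo hi UNIV)"
  then obtain x where x: "x \<in> closed_lift f True" "x \<in> closed_box lo hi UNIV" "y = reduce x" by blast
  have "x $ i \<in> Ar U" for i
    using closed_lift_in_box_compact(2)[OF f lo hi] x(1,2) by blast
  moreover have "x \<in> ospace HS" using x(1) closed_lift_props[OF f, of True] by blast
  ultimately show "y \<in> formula_set RS f"
    using mem_closed_lift_iff[OF f, of x True] off_zeros x(1,3) by simp
qed

lemma dim_le_reduce_closed_lift_in_box_diff:
  fixes f :: "(rfield, 'n::finite) formula"
  assumes f: "formula_over RS f" and lo: "lo \<in> ocarrier RS" and hi: "hi \<in> ocarrier RS"
    and inside: "\<forall>y\<in>formula_set RS f. \<forall>i. oless RS lo (y $ i) \<and> oless RS (y $ i) hi"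
  defines "E \<equiv> closed_lift f True \<inter> closed_box lo hi UNIV"
    and "K \<equiv> formula_set RS f"
  shows "dim_le RS ((reduce ` E - K) \<union> (K - reduce ` E)) (CARD('n) - 1)"
proof (rule dim_le_if_covered_by_zero_sets[where ps = "filter (\<lambda>e. \<not> vanishes e) (atoms f)"])
  show "\<forall>e\<in>set (filter (\<lambda>e. \<not> vanishes e) (atoms f)).
      pconsts e \<subseteq> ocarrier RS \<and> (\<exists>y\<in>ospace RS. peval RS e y \<noteq> ozero RS)"
    using f by (auto simp: formula_over_def vanishes_def)
  show "\<exists>e\<in>set (filter (\<lambda>e. \<not> vanishes e) (atoms f)). peval RS e y = ozero RS"
    if y: "y \<in> (reduce ` E - K) \<union> (K - reduce ` E)" "y \<in> ospace RS" for y
  proof (rule ccontr)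
    assume "\<not> ?thesis"
    then have "\<And>e. e \<in> set (atoms f) \<Longrightarrow> \<not> vanishes e \<Longrightarrow> peval RS e y \<noteq> ozero RS" by auto
    from reduce_closed_lift_in_box_agrees[OF f lo hi inside y(2) this] y(1)
    show False unfolding E_def K_def by blast
  qed
qed

end

theorem corollary3p7:
  fixes U :: "complex set set" and K :: "(rfield ^ 'n) set"
  assumes "is_ultrafilter U" and "nonprincipal U" and "converges_to_0 U"
    and "def_compact (R_str U) K"
  shows "\<exists>E :: (hstar ^ 'n) set. def_compact (hstar_str U) E \<and>
           E \<subseteq> {x. \<forall>i. x $ i \<in> Ar U} \<and>
           dim_le (R_str U) ((reduce_set U E - K) \<union> (K - reduce_set U E)) (CARD('n) - 1)"
proof -
  interpret infinitesimal_ultrafilter U using assms(1-3) by unfold_locales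
  obtain f where f: "formula_over RS f" "K = formula_set RS f"
    using assms(4) semialg_imp_formula_set unfolding def_compact_def by blast
  obtain lo hi where lo: "lo \<in> ocarrier RS" and hi: "hi \<in> ocarrier RS"
    and inside: "\<forall>y\<in>K. \<forall>i. oless RS lo (y $ i) \<and> oless RS (y $ i) hi"
    using assms(4) unfolding def_compact_def obounded_def by blast
  show ?thesis
    using closed_lift_in_box_compact[OF f(1) lo hi]
      dim_le_reduce_closed_lift_in_box_diff[OF f(1) lo hi inside[unfolded f(2)]]
    unfolding reduce_set_eq_image f(2) by blast
qed

end
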